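(* Let $\mathcal{H}_S,\mathcal{H}_E$ be finite-dimensional Hilbert spaces with dimensions $d_S,d_E$, with orthonormal bases $\{|i\rangle_S\}_{i=1}^{d_S}$ and $\{|j\rangle_E\}_{j=1}^{d_E}$. Let $H_{SE}$ be a Hamiltonian on $\mathcal{H}_S\otimes\mathcal{H}_E$ with orthonormal eigenbasis $\{|E_k\rangle_{SE}\}_{k=1}^{d_Sd_E}$ and corresponding eigenvalues $E_k$, and let $U(t)=\exp(-iH_{SE}t)$. For a map $k\mapsto(\xi(k),\hat\xi(k))$ from $\{1,\ldots,d_Sd_E\}$ to $\{1,\ldots,d_S\}\times\{1,\ldots,d_E\}$, set $f_k=|\langle E_k|(|\xi(k)\rangle_S\otimes|\hat\xi(k)\rangle_E)|$. For $\phi\in\{1,\ldots,d_S\}$ define $\delta(\phi)=\max_{k\mapsto(\xi(k),\hat\xi(k))\ \text{injective}}\ \min\{f_k: \xi(k)=\phi\}$. Consider the initial system state $|\phi\rangle_S$ (the basis vector with index $\phi$) and assume $\delta(\phi)>\frac{1}{\sqrt2}$. Let $\tau_S(t)=\mathrm{tr}_E\left[U(t)\left(|\phi\rangle\langle\phi|_S\otimes\frac{\mathbb{I}_E}{d_E}\right)U(t)^\dagger\right]$. Then for all times $t$, $\left\|\tau_S(t)-|\phi\rangle\langle\phi|_S\right\|_1\leq 4\delta(\phi)\sqrt{1-\delta(\phi)^2}$.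
   Context: $\|X\|_1=\mathrm{tr}\sqrt{X^\dagger X}$ is the trace norm; $\mathrm{tr}_E$ is the partial trace over $E$. *)

theory Defs
  imports Complex_Main "Jordan_Normal_Form.Matrix"
begin

definition adj :: "complex mat \<Rightarrow> complex mat" where
  "adj A = mat (dim_col A) (dim_row A) (\<lambda>(i,j). cnj (A $$ (j,i)))"

definition cinner :: "complex vec \<Rightarrow> complex vec \<Rightarrow> complex" where
  "cinner u v = (\<Sum>i<dim_vec v. cnj (u $ i) * v $ i)"

(* computational basis vector |i> of a d-dimensional space (indices 0..d-1) *)
definition ket :: "nat \<Rightarrow> nat \<Rightarrow> complex vec" where
  "ket d i = unit_vec d i"

definition proj :: "complex vec \<Rightarrow> complex mat" where
  "proj v = mat (dim_vec v) (dim_vec v) (\<lambda>(i,j). v $ i * cnj (v $ j))"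

(* tensor (Kronecker) products, index (i,j) of H_S \<otimes> H_E is i * d_E + j *)
definition tensor_vec :: "complex vec \<Rightarrow> complex vec \<Rightarrow> complex vec" where
  "tensor_vec u v = vec (dim_vec u * dim_vec v) (\<lambda>i. u $ (i div dim_vec v) * v $ (i mod dim_vec v))"

definition tensor_mat :: "complex mat \<Rightarrow> complex mat \<Rightarrow> complex mat" where
  "tensor_mat A B = mat (dim_row A * dim_row B) (dim_col A * dim_col B)
     (\<lambda>(i,j). A $$ (i div dim_row B, j div dim_col B) * B $$ (i mod dim_row B, j mod dim_col B))"

definition ptrace_E :: "nat \<Rightarrow> nat \<Rightarrow> complex mat \<Rightarrow> complex mat" where
  "ptrace_E dS dE M = mat dS dS (\<lambda>(i,j). \<Sum>l<dE. M $$ (i * dE + l, j * dE + l))"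

definition mat_exp :: "complex mat \<Rightarrow> complex mat" where
  "mat_exp A = mat (dim_row A) (dim_col A) (\<lambda>(i,j). \<Sum>m. (A ^\<^sub>m m) $$ (i,j) / of_nat (fact m))"

definition psd :: "complex mat \<Rightarrow> bool" where
  "psd B \<longleftrightarrow> B \<in> carrier_mat (dim_row B) (dim_row B) \<and> adj B = B \<and>
     (\<forall>v \<in> carrier_vec (dim_row B). 0 \<le> Re (cinner v (B *\<^sub>v v)))"

definition psd_sqrt :: "complex mat \<Rightarrow> complex mat" where
  "psd_sqrt A = (THE B. dim_row B = dim_row A \<and> psd B \<and> B * B = A)"

definition mtrace :: "complex mat \<Rightarrow> complex" where
  "mtrace A = (\<Sum>i<dim_row A. A $$ (i,i))"

definition trace_norm :: "complex mat \<Rightarrow> real" where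
  "trace_norm X = Re (mtrace (psd_sqrt (adj X * X)))"

(* delta(phi): maximum over injective k \<mapsto> (xi k, xihat k) of min {f_k : xi k = phi},
   with f_k = |<E_k| (|xi k> \<otimes> |xihat k>)|; all indices are 0-based *)
definition delta :: "nat \<Rightarrow> nat \<Rightarrow> (nat \<Rightarrow> complex vec) \<Rightarrow> nat \<Rightarrow> real" where
  "delta dS dE Ev phi = Max {Min {cmod (cinner (Ev k) (tensor_vec (ket dS (fst (\<sigma> k))) (ket dE (snd (\<sigma> k)))))
                                 | k. k < dS * dE \<and> fst (\<sigma> k) = phi}
                           | \<sigma>. inj_on \<sigma> {..<dS * dE} \<and> \<sigma> ` {..<dS * dE} \<subseteq> {..<dS} \<times> {..<dE}}"

end

theory Submission
  imports Defs "Jordan_Normal_Form.Char_Poly" "HOL-Computational_Algebra.Fundamental_Theorem_Algebra"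
    "HOL-Analysis.L2_Norm"
begin

text \<open>
  The reduced state \<open>\<tau>(t)\<close> is the mixture \<open>\<Sum>\<^sub>j\<^sub>l |b\<^sub>j\<^sub>l\<rangle>\<langle>b\<^sub>j\<^sub>l|\<close> of the vectors
  \<open>b\<^sub>j\<^sub>l = \<langle>\<cdot>,l|U(t)|\<phi>,j\<rangle>/\<surd>d\<^sub>E\<close>, with \<open>\<Sum>\<^sub>j\<^sub>l \<parallel>b\<^sub>j\<^sub>l\<parallel>\<^sup>2 = 1\<close>. The Hermitian matrix
  \<open>X = \<tau> - |\<phi>\<rangle>\<langle>\<phi>|\<close> has trace zero and is positive semidefinite on the hyperplane \<open>\<phi>\<^sup>\<bottom>\<close>, so it has
  at most one negative eigenvalue and \<open>\<parallel>X\<parallel>\<^sub>1\<close> is twice its modulus. A Cauchy--Schwarz estimate gives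
  \<open>\<langle>v|X|v\<rangle> \<ge> -\<surd>(1 - p)\<close> for unit vectors \<open>v\<close>, where \<open>p = \<langle>\<phi>|\<tau>|\<phi>\<rangle>\<close>; hence \<open>\<parallel>X\<parallel>\<^sub>1 \<le> 2\<surd>(1 - p)\<close>.

  Finally \<open>p\<close> is at least the average over \<open>j\<close> of \<open>|\<langle>\<phi>,j|U|\<phi>,j\<rangle>|\<^sup>2\<close>, and
  \<open>\<langle>\<phi>,j|U|\<phi>,j\<rangle> = \<Sum>\<^sub>k exp(-i E\<^sub>k t) |\<langle>E\<^sub>k|\<phi>,j\<rangle>|\<^sup>2\<close> is a convex combination of unit complex numbers in
  which, by the definition of \<open>\<delta>(\<phi>)\<close>, some weight is at least \<open>\<delta>\<^sup>2 > 1/2\<close>. Its modulus is therefore at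
  least \<open>2\<delta>\<^sup>2 - 1\<close>, and \<open>1 - p \<le> 1 - (2\<delta>\<^sup>2 - 1)\<^sup>2 = 4\<delta>\<^sup>2(1 - \<delta>\<^sup>2)\<close>.

  Since the trace norm is defined through the positive square root as a definite description, evaluating
  it needs the spectral theorem for Hermitian matrices and the uniqueness of positive square roots.
\<close>

section \<open>Adjoints and the inner product\<close>

lemma index_mult_mat_sum:
  "A \<in> carrier_mat n m \<Longrightarrow> B \<in> carrier_mat m p \<Longrightarrow> i < n \<Longrightarrow> j < p \<Longrightarrow>
   (A * B) $$ (i,j) = (\<Sum>k<m. A $$ (i,k) * B $$ (k,j))"
  by (auto simp: scalar_prod_def row_def col_def atLeast0LessThan intro!: sum.cong)

lemma index_mult_mat_vec_sum:
  "A \<in> carrier_mat n m \<Longrightarrow> v \<in> carrier_vec m \<Longrightarrow> i < n \<Longrightarrow>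
   (A *\<^sub>v v) $ i = (\<Sum>j<m. A $$ (i,j) * v $ j)"
  by (auto simp: scalar_prod_def row_def atLeast0LessThan intro!: sum.cong)

lemma index_mult_mat_vec_unit_vec:
  fixes A :: "complex mat"
  shows "A \<in> carrier_mat n m \<Longrightarrow> i < n \<Longrightarrow> j < m \<Longrightarrow> (A *\<^sub>v unit_vec m j) $ i = A $$ (i,j)"
  by (simp add: index_mult_mat_vec_sum[of A n m] unit_vec_def if_distrib[of "\<lambda>x. _ * x"]
      del: index_mult_mat_vec cong: if_cong)

lemma adj_carrier_mat [simp]: "A \<in> carrier_mat n m \<Longrightarrow> adj A \<in> carrier_mat m n"
  by (auto simp: adj_def)

lemma adj_dim [simp]: "dim_row (adj A) = dim_col A" "dim_col (adj A) = dim_row A"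
  by (auto simp: adj_def)

lemma index_adj [simp]: "i < dim_col A \<Longrightarrow> j < dim_row A \<Longrightarrow> adj A $$ (i,j) = cnj (A $$ (j,i))"
  by (auto simp: adj_def)

lemma adj_adj [simp]: "adj (adj A) = A"
  by (rule eq_matI) auto

lemma adj_minus: "A \<in> carrier_mat n m \<Longrightarrow> B \<in> carrier_mat n m \<Longrightarrow> adj (A - B) = adj A - adj B"
  by (rule eq_matI) auto

lemma adj_mult:
  assumes "A \<in> carrier_mat n m" "B \<in> carrier_mat m p"
  shows "adj (A * B) = adj B * adj A"
proof (rule eq_matI)
  fix i j assume "i < dim_row (adj B * adj A)" "j < dim_col (adj B * adj A)"
  with assms show "adj (A * B) $$ (i, j) = (adj B * adj A) $$ (i, j)"
    by (simp add: index_mult_mat_sum[of A n m B p] index_mult_mat_sum[of "adj B" p m "adj A" n]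
        mult.commute del: index_mult_mat(1))
qed (use assms in auto)

lemma cinner_carrier: "v \<in> carrier_vec n \<Longrightarrow> cinner u v = (\<Sum>i<n. cnj (u $ i) * v $ i)"
  by (auto simp: cinner_def)

lemma cinner_zero_left [simp]: "v \<in> carrier_vec n \<Longrightarrow> cinner (0\<^sub>v n) v = 0"
  by (simp add: cinner_carrier)

lemma cinner_zero_right [simp]: "cinner u (0\<^sub>v n) = 0"
  by (simp add: cinner_def)

lemma cinner_add_left:
  "u \<in> carrier_vec n \<Longrightarrow> w \<in> carrier_vec n \<Longrightarrow> v \<in> carrier_vec n \<Longrightarrow>
   cinner (u + w) v = cinner u v + cinner w v"
  by (auto simp: cinner_def sum.distrib algebra_simps)

lemma cinner_add_right:
  "v \<in> carrier_vec n \<Longrightarrow> w \<in> carrier_vec n \<Longrightarrow> cinner u (v + w) = cinner u v + cinner u w"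
  by (auto simp: cinner_def sum.distrib algebra_simps)

lemma cinner_minus_right:
  "v \<in> carrier_vec n \<Longrightarrow> w \<in> carrier_vec n \<Longrightarrow> cinner u (v - w) = cinner u v - cinner u w"
  by (auto simp: cinner_def sum_subtractf algebra_simps)

lemma cinner_smult_left:
  "v \<in> carrier_vec n \<Longrightarrow> u \<in> carrier_vec n \<Longrightarrow> cinner (c \<cdot>\<^sub>v u) v = cnj c * cinner u v"
  by (auto simp: cinner_def sum_distrib_left algebra_simps)

lemma cinner_smult_right: "cinner u (c \<cdot>\<^sub>v v) = c * cinner u v"
  by (auto simp: cinner_def sum_distrib_left algebra_simps)

lemma cinner_commute: "v \<in> carrier_vec n \<Longrightarrow> u \<in> carrier_vec n \<Longrightarrow> cinner v u = cnj (cinner u v)"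
  by (auto simp: cinner_def algebra_simps)

lemma cinner_unit_vec: "v \<in> carrier_vec n \<Longrightarrow> p < n \<Longrightarrow> cinner (unit_vec n p) v = v $ p"
  by (simp add: cinner_carrier if_distrib[of cnj] if_distrib[of "\<lambda>x. x * _"] cong: if_cong)

lemma cinner_unit_vec_right: "p < n \<Longrightarrow> cinner v (unit_vec n p) = cnj (v $ p)"
  by (simp add: cinner_def unit_vec_def if_distrib[of "\<lambda>x. _ * x"] cong: if_cong)

lemma cnj_mult_self: "cnj z * z = complex_of_real ((cmod z)\<^sup>2)"
  unfolding complex_norm_square by (rule mult.commute)

lemma cinner_self: "v \<in> carrier_vec n \<Longrightarrow> cinner v v = complex_of_real (\<Sum>i<n. (cmod (v $ i))\<^sup>2)"
  by (simp add: cinner_def cnj_mult_self del: of_real_power)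

lemma cinner_self_Re: "v \<in> carrier_vec n \<Longrightarrow> Re (cinner v v) = (\<Sum>i<n. (cmod (v $ i))\<^sup>2)"
  by (subst cinner_self) (simp_all only: Re_complex_of_real)

lemma cinner_self_eq_0D:
  assumes "v \<in> carrier_vec n" "cinner v v = 0"
  shows "v = 0\<^sub>v n"
proof -
  have "(\<Sum>i<n. (cmod (v $ i))\<^sup>2) = 0"
    using assms cinner_self[OF assms(1)] by (simp only: of_real_eq_0_iff)
  then have "\<forall>i<n. v $ i = 0" by (subst (asm) sum_nonneg_eq_0_iff) auto
  with assms(1) show ?thesis by (intro eq_vecI) auto
qed

lemma cinner_mult_mat_vec:
  assumes "A \<in> carrier_mat n m" "u \<in> carrier_vec n" "v \<in> carrier_vec m"
  shows "cinner u (A *\<^sub>v v) = cinner (adj A *\<^sub>v u) v"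
proof -
  have "cinner u (A *\<^sub>v v) = (\<Sum>i<n. \<Sum>j<m. cnj (u $ i) * A $$ (i,j) * v $ j)"
    using assms by (auto simp: cinner_carrier[of _ n] index_mult_mat_vec_sum sum_distrib_left
        mult.assoc simp del: index_mult_mat_vec)
  also have "\<dots> = (\<Sum>j<m. \<Sum>i<n. cnj (u $ i) * A $$ (i,j) * v $ j)"
    by (rule sum.swap)
  also have "\<dots> = cinner (adj A *\<^sub>v u) v"
    using assms by (auto simp: cinner_carrier[of _ m] index_mult_mat_vec_sum[of _ m n] sum_distrib_right
        sum_distrib_left mult.commute mult.left_commute simp del: index_mult_mat_vec intro!: sum.cong)
  finally show ?thesis .
qed

definition unitary :: "nat \<Rightarrow> complex mat \<Rightarrow> bool" where
  "unitary n W \<longleftrightarrow> W \<in> carrier_mat n n \<and> adj W * W = 1\<^sub>m n"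

lemma cinner_unitary:
  assumes "unitary n W" "u \<in> carrier_vec n" "v \<in> carrier_vec n"
  shows "cinner (W *\<^sub>v u) (W *\<^sub>v v) = cinner u v"
proof -
  have W: "W \<in> carrier_mat n n" and WW: "adj W * W = 1\<^sub>m n"
    using assms(1) by (auto simp: unitary_def)
  have "cinner (W *\<^sub>v u) (W *\<^sub>v v) = cinner ((adj W * W) *\<^sub>v u) v"
    using assms W by (simp add: cinner_mult_mat_vec assoc_mult_mat_vec[of "adj W" n n W])
  then show ?thesis using WW assms by simp
qed

lemma unitary_mult_adj: "unitary n W \<Longrightarrow> W * adj W = 1\<^sub>m n"
  unfolding unitary_def by (metis adj_carrier_mat mat_mult_left_right_inverse)

section \<open>The spectral theorem for Hermitian matrices\<close>

definition orthonormal_basis :: "nat \<Rightarrow> (nat \<Rightarrow> complex vec) \<Rightarrow> bool" where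
  "orthonormal_basis n u \<longleftrightarrow> (\<forall>i<n. u i \<in> carrier_vec n) \<and>
     (\<forall>i<n. \<forall>j<n. cinner (u i) (u j) = (if i = j then 1 else 0))"

lemma unit_eigenvector_exists:
  assumes A: "A \<in> carrier_mat n n" and n: "0 < n"
  shows "\<exists>v \<mu>. v \<in> carrier_vec n \<and> cinner v v = 1 \<and> A *\<^sub>v v = \<mu> \<cdot>\<^sub>v v"
proof -
  have "\<not> constant (poly (char_poly A))"
    using n degree_monic_char_poly[OF A] by (subst constant_degree) simp
  then obtain \<mu> where "poly (char_poly A) \<mu> = 0"
    using fundamental_theorem_of_algebra by blast
  then obtain w where "eigenvector A w \<mu>"
    using eigenvalue_root_char_poly[OF A] unfolding eigenvalue_def by blast
  then have w: "w \<in> carrier_vec n" and w0: "w \<noteq> 0\<^sub>v n" and Aw: "A *\<^sub>v w = \<mu> \<cdot>\<^sub>v w"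
    using A unfolding eigenvector_def by auto
  define t where "t = (\<Sum>i<n. (cmod (w $ i))\<^sup>2)"
  have ww: "cinner w w = complex_of_real t"
    unfolding t_def by (rule cinner_self[OF w])
  have "t \<noteq> 0" using cinner_self_eq_0D[OF w] w0 ww by auto
  moreover have "t \<ge> 0" unfolding t_def by (rule sum_nonneg) simp
  ultimately have "t > 0" by simp
  define v where "v = complex_of_real (1 / sqrt t) \<cdot>\<^sub>v w"
  have v: "v \<in> carrier_vec n" unfolding v_def using w by simp
  have "cinner v v = complex_of_real (1 / sqrt t) * complex_of_real (1 / sqrt t) * complex_of_real t"
    unfolding v_def cinner_smult_right cinner_smult_left[OF smult_carrier_vec[THEN iffD2, OF w] w]
      cinner_smult_left[OF w w] ww by simp
  also have "\<dots> = 1" using \<open>t > 0\<close> by (simp flip: of_real_mult)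
  finally have "cinner v v = 1" .
  moreover have "A *\<^sub>v v = \<mu> \<cdot>\<^sub>v v"
    unfolding v_def using mult_mat_vec[OF A w] Aw by (simp add: smult_smult_assoc mult.commute)
  ultimately show ?thesis using v by blast
qed

text \<open>A phase times a Householder reflection; the condition on \<open>s\<close> covers both \<open>s = 2 / \<parallel>u\<parallel>\<^sup>2\<close> and \<open>s = 0\<close>.\<close>

lemma unitary_phase_reflection:
  assumes u: "u \<in> carrier_vec n" and \<alpha>: "cmod \<alpha> = 1"
    and s: "cnj s = s" and ss: "s * s * cinner u u = 2 * s"
  shows "unitary n (mat n n (\<lambda>(i,j). \<alpha> * ((if i = j then 1 else 0) - s * u $ i * cnj (u $ j))))"
    (is "unitary n ?W")
proof -
  have \<alpha>\<alpha>: "cnj \<alpha> * \<alpha> = 1" using \<alpha> by (simp add: cnj_mult_self)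
  have "adj ?W * ?W = 1\<^sub>m n"
  proof (rule eq_matI)
    fix i j assume "i < dim_row (1\<^sub>m n)" "j < dim_col (1\<^sub>m n)"
    then have ij: "i < n" "j < n" by auto
    have "(adj ?W * ?W) $$ (i,j) = (\<Sum>k<n. (if k = i then (if i = j then 1 else 0) else 0)
        - s * (if k = i then u$k * cnj (u$j) else 0) - s * (if k = j then cnj (u$k) * u$i else 0)
        + (s * s * (u$i * cnj (u$j))) * (cnj (u$k) * u$k))"
    proof (subst index_mult_mat_sum[of _ n n _ n], (use ij in simp_all)[4], rule sum.cong[OF refl])
      fix k assume "k \<in> {..<n}"
      then have "cnj (?W $$ (k,i)) * ?W $$ (k,j) = (cnj \<alpha> * \<alpha>) *
          (((if k = i then 1 else 0) - s * cnj (u$k) * u$i) * ((if k = j then 1 else 0) - s * u$k * cnj (u$j)))"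
        using ij s by simp
      also have "\<dots> = (if k = i then (if i = j then 1 else 0) else 0)
          - s * (if k = i then u$k * cnj (u$j) else 0) - s * (if k = j then cnj (u$k) * u$i else 0)
          + (s * s * (u$i * cnj (u$j))) * (cnj (u$k) * u$k)"
        unfolding \<alpha>\<alpha> by (auto simp: algebra_simps)
      finally show "adj ?W $$ (i,k) * ?W $$ (k,j) = \<dots>" using ij \<open>k \<in> {..<n}\<close> by simp
    qed
    also have "\<dots> = (if i = j then 1 else 0) - s * (u$i * cnj (u$j)) - s * (cnj (u$j) * u$i)
        + (s * s * (u$i * cnj (u$j))) * cinner u u"
      using ij cinner_carrier[OF u, of u]
      by (simp add: sum.distrib sum_subtractf sum_distrib_left[symmetric])
    also have "\<dots> = (if i = j then 1 else 0) - 2 * s * (u$i * cnj (u$j)) + (u$i * cnj (u$j)) * (s * s * cinner u u)"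
      by (simp add: algebra_simps)
    also have "\<dots> = 1\<^sub>m n $$ (i,j)"
      using ij unfolding ss by (simp add: algebra_simps)
    finally show "(adj ?W * ?W) $$ (i,j) = 1\<^sub>m n $$ (i,j)" .
  qed auto
  then show ?thesis unfolding unitary_def by simp
qed

lemma cinner_self_minus_phase_unit_vec:
  assumes v: "v \<in> carrier_vec n" "cinner v v = 1" and n: "0 < n"
    and \<alpha>: "cmod \<alpha> = 1" and v0: "v $ 0 = \<alpha> * cmod (v $ 0)"
  shows "cinner (v - \<alpha> \<cdot>\<^sub>v unit_vec n 0) (v - \<alpha> \<cdot>\<^sub>v unit_vec n 0) = complex_of_real (2 - 2 * cmod (v $ 0))"
proof -
  define u where "u = v - \<alpha> \<cdot>\<^sub>v unit_vec n 0"
  have u: "u \<in> carrier_vec n" unfolding u_def using v by simp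
  have u0: "u $ 0 = \<alpha> * complex_of_real (cmod (v $ 0) - 1)"
    unfolding u_def using v n v0 by (simp add: algebra_simps)
  have "(cmod (u $ 0))\<^sup>2 = (cmod (v $ 0) - 1)\<^sup>2"
    unfolding u0 norm_mult \<alpha> norm_of_real by simp
  moreover have "u $ k = v $ k" if "k \<in> {..<n} - {0}" for k
    unfolding u_def using v that by simp
  moreover have "(\<Sum>k<n. (cmod (v $ k))\<^sup>2) = 1"
    using cinner_self_Re[OF v(1)] v(2) by simp
  ultimately have "(\<Sum>k<n. (cmod (u $ k))\<^sup>2) = 2 - 2 * cmod (v $ 0)"
    using n by (simp add: sum.remove[of "{..<n}" 0] power2_eq_square algebra_simps)
  then show ?thesis using cinner_self[OF u] unfolding u_def by simp
qed

lemma unitary_first_column_exists: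
  assumes v: "v \<in> carrier_vec n" and v1: "cinner v v = 1" and n: "0 < n"
  shows "\<exists>W. unitary n W \<and> W *\<^sub>v unit_vec n 0 = v"
proof -
  define r where "r = cmod (v $ 0)"
  define \<alpha> where "\<alpha> = (if v $ 0 = 0 then 1 else v $ 0 / complex_of_real r)"
  have \<alpha>1: "cmod \<alpha> = 1" and v0: "v $ 0 = \<alpha> * r"
    by (auto simp: \<alpha>_def r_def norm_divide)
  have \<alpha>\<alpha>: "\<alpha> * cnj \<alpha> = 1" using \<alpha>1 cnj_mult_self[of \<alpha>] by (simp add: mult.commute)
  define u where "u = v - \<alpha> \<cdot>\<^sub>v unit_vec n 0"
  have u: "u \<in> carrier_vec n" unfolding u_def using v by simp
  have uu: "cinner u u = complex_of_real (2 - 2 * r)"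
    unfolding u_def r_def by (rule cinner_self_minus_phase_unit_vec[OF v v1 n \<alpha>1 v0[unfolded r_def]])
  define s where "s = complex_of_real (2 / (2 - 2 * r))"
  have "2 / c * (2 / c) * c = 2 * (2 / c)" for c :: real
    by (cases "c = 0") (simp_all add: field_simps)
  then have ss: "s * s * cinner u u = 2 * s"
    unfolding uu s_def by (metis of_real_mult of_real_numeral)
  define W where "W = mat n n (\<lambda>(i,j). \<alpha> * ((if i = j then 1 else 0) - s * u $ i * cnj (u $ j)))"
  have W: "unitary n W"
    unfolding W_def by (rule unitary_phase_reflection[OF u \<alpha>1 _ ss]) (simp add: s_def)
  \<comment> \<open>if \<open>r = 1\<close> then \<open>u = 0\<close>, otherwise \<open>s (1 - r) = 1\<close>\<close>
  have su: "s * (1 - r) * u $ i = u $ i" if "i < n" for i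
  proof (cases "r = 1")
    case True
    then have "u = 0\<^sub>v n" using cinner_self_eq_0D[OF u] uu by simp
    then show ?thesis using that by simp
  qed (simp add: s_def field_simps)
  have "W *\<^sub>v unit_vec n 0 = v"
  proof (rule eq_vecI)
    fix i assume "i < dim_vec v"
    then have i: "i < n" using v by simp
    have "(W *\<^sub>v unit_vec n 0) $ i = \<alpha> * ((if i = 0 then 1 else 0) - s * u $ i * cnj (u $ 0))"
      using i n by (simp add: W_def index_mult_mat_vec_unit_vec[of _ n n])
    also have "\<dots> = \<alpha> * (if i = 0 then 1 else 0) + s * (1 - r) * u $ i * (\<alpha> * cnj \<alpha>)"
      using v n by (simp add: u_def v0 algebra_simps)
    also have "\<dots> = v $ i"
      unfolding \<alpha>\<alpha> mult_1_right su[OF i] using i v by (simp add: u_def)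
    finally show "(W *\<^sub>v unit_vec n 0) $ i = v $ i" .
  qed (use v in \<open>simp add: W_def\<close>)
  with W show ?thesis by blast
qed

lemma cinner_vCons:
  "x \<in> carrier_vec m \<Longrightarrow> y \<in> carrier_vec m \<Longrightarrow> cinner (vCons a x) (vCons b y) = cnj a * b + cinner x y"
  by (simp add: cinner_def vec_index_vCons sum.lessThan_Suc_shift del: sum.lessThan_Suc)

lemma orthonormal_basis_vCons:
  assumes "orthonormal_basis m u"
  shows "orthonormal_basis (Suc m) (\<lambda>i. if i = 0 then vCons 1 (0\<^sub>v m) else vCons 0 (u (i - 1)))"
  unfolding orthonormal_basis_def
proof (intro conjI allI impI)
  have u: "u (k - 1) \<in> carrier_vec m" if "0 < k" "k < Suc m" for k
    using assms that by (auto simp: orthonormal_basis_def)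
  fix i j assume i: "i < Suc m" and j: "j < Suc m"
  show "(if i = 0 then vCons 1 (0\<^sub>v m) else vCons 0 (u (i - 1))) \<in> carrier_vec (Suc m)"
    using u[OF _ i] by simp
  show "cinner (if i = 0 then vCons 1 (0\<^sub>v m) else vCons 0 (u (i - 1)))
      (if j = 0 then vCons 1 (0\<^sub>v m) else vCons 0 (u (j - 1))) = (if i = j then 1 else 0)"
    using u[OF _ i] u[OF _ j] assms i j
    by (cases "i = 0"; cases "j = 0") (auto simp: cinner_vCons[of _ m] orthonormal_basis_def)
qed

lemma orthonormal_basis_unitary_image:
  assumes "unitary n W" "orthonormal_basis n u"
  shows "orthonormal_basis n (\<lambda>i. W *\<^sub>v u i)"
  using assms cinner_unitary[OF assms(1)] unfolding orthonormal_basis_def unitary_def by auto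

lemma hermitian_deflation:
  assumes A: "A \<in> carrier_mat (Suc m) (Suc m)" and hA: "adj A = A"
    and e: "A *\<^sub>v vCons 1 (0\<^sub>v m) = \<mu> \<cdot>\<^sub>v vCons 1 (0\<^sub>v m)"
  defines "B \<equiv> mat m m (\<lambda>(i,j). A $$ (Suc i, Suc j))"
  shows "adj B = B" and "cnj \<mu> = \<mu>"
    and "\<And>x. x \<in> carrier_vec m \<Longrightarrow> A *\<^sub>v vCons 0 x = vCons 0 (B *\<^sub>v x)"
proof -
  have col0: "A $$ (i,0) = (if i = 0 then \<mu> else 0)" if "i < Suc m" for i
  proof -
    have "(A *\<^sub>v vCons 1 (0\<^sub>v m)) $ i = A $$ (i,0)"
      using A that by (simp add: index_mult_mat_vec_sum[OF A] sum.lessThan_Suc_shift vec_index_vCons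
          del: sum.lessThan_Suc index_mult_mat_vec)
    then show ?thesis using e that by (cases i) (auto simp: vec_index_vCons)
  qed
  have herm: "A $$ (i,j) = cnj (A $$ (j,i))" if "i < Suc m" "j < Suc m" for i j
    using arg_cong[OF hA, of "\<lambda>M. M $$ (i,j)"] A that by simp
  show "cnj \<mu> = \<mu>" using herm[of 0 0] col0[of 0] by simp
  then have row0: "A $$ (0,j) = (if j = 0 then \<mu> else 0)" if "j < Suc m" for j
    using herm[OF _ that, of 0] col0[OF that] by simp
  show "adj B = B"
  proof (rule eq_matI)
    fix i j assume "i < dim_row B" "j < dim_col B"
    then show "adj B $$ (i,j) = B $$ (i,j)" using herm[of "Suc i" "Suc j"] by (simp add: B_def)
  qed (simp_all add: B_def)
  fix x :: "complex vec" assume x: "x \<in> carrier_vec m"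
  show "A *\<^sub>v vCons 0 x = vCons 0 (B *\<^sub>v x)"
  proof (rule eq_vecI)
    fix i assume "i < dim_vec (vCons 0 (B *\<^sub>v x))"
    then have i: "i < Suc m" by (simp add: B_def)
    have "(A *\<^sub>v vCons 0 x) $ i = (\<Sum>j<m. A $$ (i, Suc j) * x $ j)"
      using x by (simp add: index_mult_mat_vec_sum[OF A _ i] sum.lessThan_Suc_shift
          del: sum.lessThan_Suc index_mult_mat_vec)
    also have "\<dots> = vCons 0 (B *\<^sub>v x) $ i"
    proof (cases i)
      case 0
      then show ?thesis using row0 by (auto intro!: sum.neutral)
    next
      case (Suc k)
      have "B \<in> carrier_mat m m" by (simp add: B_def)
      from index_mult_mat_vec_sum[OF this x] Suc i show ?thesis by (simp add: B_def)
    qed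
    finally show "(A *\<^sub>v vCons 0 x) $ i = vCons 0 (B *\<^sub>v x) $ i" .
  qed (use A in \<open>simp add: B_def\<close>)
qed

lemma unit_vec_Suc_0: "unit_vec (Suc m) 0 = vCons 1 (0\<^sub>v m)"
  by (rule eq_vecI) (auto simp: vec_index_vCons)

lemma eigenbasis_vCons:
  assumes A: "A \<in> carrier_mat (Suc m) (Suc m)"
    and e: "A *\<^sub>v vCons 1 (0\<^sub>v m) = complex_of_real c \<cdot>\<^sub>v vCons 1 (0\<^sub>v m)"
    and AB: "\<And>x. x \<in> carrier_vec m \<Longrightarrow> A *\<^sub>v vCons 0 x = vCons 0 (B *\<^sub>v x)"
    and u: "orthonormal_basis m u" and B: "\<forall>i<m. B *\<^sub>v u i = complex_of_real (d i) \<cdot>\<^sub>v u i"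
  shows "\<exists>y d. orthonormal_basis (Suc m) y \<and> (\<forall>i<Suc m. A *\<^sub>v y i = complex_of_real (d i) \<cdot>\<^sub>v y i)"
proof (intro exI conjI)
  show "orthonormal_basis (Suc m) (\<lambda>i. if i = 0 then vCons 1 (0\<^sub>v m) else vCons 0 (u (i - 1)))"
    by (rule orthonormal_basis_vCons[OF u])
  show "\<forall>i<Suc m. A *\<^sub>v (if i = 0 then vCons 1 (0\<^sub>v m) else vCons 0 (u (i - 1)))
      = complex_of_real (if i = 0 then c else d (i - 1)) \<cdot>\<^sub>v (if i = 0 then vCons 1 (0\<^sub>v m) else vCons 0 (u (i - 1)))"
  proof (intro allI impI)
    fix i assume i: "i < Suc m"
    show "A *\<^sub>v (if i = 0 then vCons 1 (0\<^sub>v m) else vCons 0 (u (i - 1)))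
      = complex_of_real (if i = 0 then c else d (i - 1)) \<cdot>\<^sub>v (if i = 0 then vCons 1 (0\<^sub>v m) else vCons 0 (u (i - 1)))"
    proof (cases i)
      case (Suc k)
      then have "u k \<in> carrier_vec m" "k < m" using u i by (auto simp: orthonormal_basis_def)
      moreover have "vCons 0 (x \<cdot>\<^sub>v u k) = x \<cdot>\<^sub>v vCons 0 (u k)" for x
        by (rule eq_vecI) (auto simp: vec_index_vCons)
      ultimately show ?thesis using Suc AB[of "u k"] B by simp
    qed (simp add: e)
  qed
qed

lemma hermitian_unitary_conj:
  assumes A: "A \<in> carrier_mat n n" and hA: "adj A = A" and W: "unitary n W"
  shows "adj W * A * W \<in> carrier_mat n n" and "adj (adj W * A * W) = adj W * A * W"
proof -
  have Wc: "W \<in> carrier_mat n n" and aW: "adj W \<in> carrier_mat n n"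
    using W by (auto simp: unitary_def)
  show "adj W * A * W \<in> carrier_mat n n" using A Wc aW by (meson mult_carrier_mat)
  show "adj (adj W * A * W) = adj W * A * W"
    using adj_mult[OF mult_carrier_mat[OF aW A] Wc] adj_mult[OF aW A] hA Wc A
    by (simp add: assoc_mult_mat[OF aW A Wc])
qed

lemma unitary_conj_eigenvector:
  assumes A: "A \<in> carrier_mat n n" and W: "unitary n W" and y: "y \<in> carrier_vec n"
  shows "(adj W * A * W) *\<^sub>v y = c \<cdot>\<^sub>v y \<longleftrightarrow> A *\<^sub>v (W *\<^sub>v y) = c \<cdot>\<^sub>v (W *\<^sub>v y)"
proof -
  have Wc: "W \<in> carrier_mat n n" and aW: "adj W \<in> carrier_mat n n" and aWW: "adj W * W = 1\<^sub>m n"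
    using W by (auto simp: unitary_def)
  have AWy: "A *\<^sub>v (W *\<^sub>v y) \<in> carrier_vec n" using A Wc y by simp
  have "(adj W * A * W) *\<^sub>v y = adj W *\<^sub>v (A *\<^sub>v (W *\<^sub>v y))"
    using A Wc aW y by (simp add: assoc_mult_mat_vec[of _ n n _ n] assoc_mult_mat[OF aW A Wc])
  moreover have "adj W *\<^sub>v (c \<cdot>\<^sub>v (W *\<^sub>v y)) = c \<cdot>\<^sub>v ((adj W * W) *\<^sub>v y)"
    using mult_mat_vec[OF aW, of "W *\<^sub>v y"] assoc_mult_mat_vec[OF aW Wc y] Wc y by simp
  moreover have "(adj W * W) *\<^sub>v y = y" using aWW y by simp
  moreover have "W *\<^sub>v (adj W *\<^sub>v x) = x" if "x \<in> carrier_vec n" for x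
    using unitary_mult_adj[OF W] Wc aW that by (simp add: assoc_mult_mat_vec[OF Wc aW that, symmetric])
  ultimately show ?thesis using AWy Wc y by (metis mult_mat_vec)
qed

theorem hermitian_spectral:
  assumes "A \<in> carrier_mat n n" "adj A = A"
  shows "\<exists>u d. orthonormal_basis n u \<and> (\<forall>i<n. A *\<^sub>v u i = complex_of_real (d i) \<cdot>\<^sub>v u i)"
  using assms
proof (induction n arbitrary: A)
  case 0
  then show ?case by (auto simp: orthonormal_basis_def)
next
  case (Suc m A)
  let ?e = "vCons 1 (0\<^sub>v m)"
  have A: "A \<in> carrier_mat (Suc m) (Suc m)" and hA: "adj A = A" by fact+
  obtain v \<mu> where v: "v \<in> carrier_vec (Suc m)" "cinner v v = 1" and Av: "A *\<^sub>v v = \<mu> \<cdot>\<^sub>v v"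
    using unit_eigenvector_exists[OF A] by auto
  obtain W where W: "unitary (Suc m) W" and We: "W *\<^sub>v ?e = v"
    using unitary_first_column_exists[OF v] unfolding unit_vec_Suc_0 by auto
  \<comment> \<open>in the basis given by the columns of \<open>W\<close>, \<open>A\<close> becomes block diagonal\<close>
  define A' where "A' = adj W * A * W"
  note conj = hermitian_unitary_conj[OF A hA W, folded A'_def]
  have A'e: "A' *\<^sub>v ?e = \<mu> \<cdot>\<^sub>v ?e"
    unfolding A'_def using unitary_conj_eigenvector[OF A W, of ?e] We Av by simp
  define B where "B = mat m m (\<lambda>(i,j). A' $$ (Suc i, Suc j))"
  note deflation = hermitian_deflation[OF conj A'e, folded B_def]
  obtain u' d' where "orthonormal_basis m u'" "\<forall>i<m. B *\<^sub>v u' i = complex_of_real (d' i) \<cdot>\<^sub>v u' i"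
    using Suc.IH[OF _ deflation(1)] by (auto simp: B_def)
  moreover have "\<mu> = complex_of_real (Re \<mu>)" using deflation(2) by (simp add: complex_eq_iff)
  ultimately obtain y d where y: "orthonormal_basis (Suc m) y"
    and "\<forall>i<Suc m. A' *\<^sub>v y i = complex_of_real (d i) \<cdot>\<^sub>v y i"
    using eigenbasis_vCons[OF conj(1) _ deflation(3)] A'e by metis
  then have "\<forall>i<Suc m. A *\<^sub>v (W *\<^sub>v y i) = complex_of_real (d i) \<cdot>\<^sub>v (W *\<^sub>v y i)"
    unfolding A'_def using unitary_conj_eigenvector[OF A W] y by (simp add: orthonormal_basis_def)
  then show ?case using orthonormal_basis_unitary_image[OF W y] by blast
qed

section \<open>Matrices with a prescribed orthonormal eigenbasis\<close>

lemma orthonormal_basis_complete: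
  assumes "orthonormal_basis n u" "a < n" "b < n"
  shows "(\<Sum>i<n. u i $ a * cnj (u i $ b)) = (if a = b then 1 else 0)"
proof -
  define U where "U = mat n n (\<lambda>(a,i). u i $ a)"
  have U: "U \<in> carrier_mat n n" and aU: "adj U \<in> carrier_mat n n" unfolding U_def by auto
  have "adj U * U = 1\<^sub>m n"
  proof (rule eq_matI)
    fix i j assume "i < dim_row (1\<^sub>m n)" "j < dim_col (1\<^sub>m n)"
    then have ij: "i < n" "j < n" by auto
    have "(adj U * U) $$ (i,j) = (\<Sum>k<n. cnj (u i $ k) * u j $ k)"
      using ij by (subst index_mult_mat_sum[OF aU U]) (auto simp: U_def)
    also have "\<dots> = cinner (u i) (u j)"
      using assms(1) ij unfolding orthonormal_basis_def by (intro cinner_carrier[symmetric]) auto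
    finally show "(adj U * U) $$ (i,j) = 1\<^sub>m n $$ (i,j)" using assms(1) ij by (simp add: orthonormal_basis_def)
  qed (use U in auto)
  then have "U * adj U = 1\<^sub>m n" using mat_mult_left_right_inverse[OF aU U] by simp
  then have "(U * adj U) $$ (a,b) = (if a = b then 1 else 0)" using assms by simp
  moreover have "(U * adj U) $$ (a,b) = (\<Sum>i<n. u i $ a * cnj (u i $ b))"
    using assms by (subst index_mult_mat_sum[OF U aU]) (auto simp: U_def)
  ultimately show ?thesis by simp
qed

definition spectral_mat :: "nat \<Rightarrow> (nat \<Rightarrow> complex vec) \<Rightarrow> (nat \<Rightarrow> complex) \<Rightarrow> complex mat" where
  "spectral_mat n u g = mat n n (\<lambda>(a,b). \<Sum>i<n. g i * (u i $ a * cnj (u i $ b)))"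

lemma spectral_mat_carrier [simp]: "spectral_mat n u g \<in> carrier_mat n n"
  by (simp add: spectral_mat_def)

lemma spectral_mat_dim [simp]: "dim_row (spectral_mat n u g) = n" "dim_col (spectral_mat n u g) = n"
  by (simp_all add: spectral_mat_def)

lemma spectral_mat_eigen:
  assumes u: "orthonormal_basis n u" and j: "j < n"
  shows "spectral_mat n u g *\<^sub>v u j = g j \<cdot>\<^sub>v u j"
proof (rule eq_vecI)
  have uj: "u j \<in> carrier_vec n" using u j by (simp add: orthonormal_basis_def)
  fix a assume "a < dim_vec (g j \<cdot>\<^sub>v u j)"
  then have a: "a < n" using uj by simp
  have "(spectral_mat n u g *\<^sub>v u j) $ a = (\<Sum>b<n. (\<Sum>i<n. g i * (u i $ a * cnj (u i $ b))) * u j $ b)"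
    using index_mult_mat_vec_sum[OF spectral_mat_carrier uj a] a by (simp add: spectral_mat_def)
  also have "\<dots> = (\<Sum>b<n. \<Sum>i<n. g i * u i $ a * (cnj (u i $ b) * u j $ b))"
    by (simp add: sum_distrib_right mult.assoc)
  also have "\<dots> = (\<Sum>i<n. \<Sum>b<n. g i * u i $ a * (cnj (u i $ b) * u j $ b))"
    by (rule sum.swap)
  also have "\<dots> = (\<Sum>i<n. g i * u i $ a * cinner (u i) (u j))"
    using uj by (simp add: sum_distrib_left cinner_carrier)
  also have "\<dots> = g j * u j $ a"
    using u j by (simp add: orthonormal_basis_def if_distrib[of "\<lambda>x. _ * x"] cong: if_cong)
  finally show "(spectral_mat n u g *\<^sub>v u j) $ a = (g j \<cdot>\<^sub>v u j) $ a" using a uj by simp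
qed (use u j in \<open>auto simp: orthonormal_basis_def\<close>)

lemma eq_spectral_mat:
  assumes u: "orthonormal_basis n u" and M: "M \<in> carrier_mat n n"
    and eig: "\<forall>i<n. M *\<^sub>v u i = g i \<cdot>\<^sub>v u i"
  shows "M = spectral_mat n u g"
proof (rule eq_matI)
  fix a b assume "a < dim_row (spectral_mat n u g)" "b < dim_col (spectral_mat n u g)"
  then have ab: "a < n" "b < n" by auto
  have uc: "u i \<in> carrier_vec n" if "i < n" for i using u that by (simp add: orthonormal_basis_def)
  have "M $$ (a,b) = (\<Sum>c<n. M $$ (a,c) * (\<Sum>i<n. u i $ c * cnj (u i $ b)))"
    using ab by (simp add: orthonormal_basis_complete[OF u] if_distrib[of "\<lambda>x. _ * x"] cong: if_cong)
  also have "\<dots> = (\<Sum>c<n. \<Sum>i<n. M $$ (a,c) * u i $ c * cnj (u i $ b))"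
    by (simp add: sum_distrib_left mult.assoc)
  also have "\<dots> = (\<Sum>i<n. \<Sum>c<n. M $$ (a,c) * u i $ c * cnj (u i $ b))"
    by (rule sum.swap)
  also have "\<dots> = (\<Sum>i<n. (\<Sum>c<n. M $$ (a,c) * u i $ c) * cnj (u i $ b))"
    by (simp add: sum_distrib_right)
  also have "\<dots> = (\<Sum>i<n. (M *\<^sub>v u i) $ a * cnj (u i $ b))"
    using index_mult_mat_vec_sum[OF M uc ab(1)] by simp
  also have "\<dots> = spectral_mat n u g $$ (a,b)"
  proof -
    have "(M *\<^sub>v u i) $ a = g i * u i $ a" if "i < n" for i
      using eig uc[OF that] that ab by simp
    then show ?thesis using ab by (auto simp: spectral_mat_def mult.assoc intro!: sum.cong)
  qed
  finally show "M $$ (a,b) = spectral_mat n u g $$ (a,b)" .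
qed (use M in auto)

lemma spectral_mat_mult:
  assumes u: "orthonormal_basis n u"
  shows "spectral_mat n u g * spectral_mat n u h = spectral_mat n u (\<lambda>i. g i * h i)"
proof (rule eq_spectral_mat[OF u])
  show "spectral_mat n u g * spectral_mat n u h \<in> carrier_mat n n"
    by (rule mult_carrier_mat[OF spectral_mat_carrier spectral_mat_carrier])
  show "\<forall>i<n. spectral_mat n u g * spectral_mat n u h *\<^sub>v u i = (g i * h i) \<cdot>\<^sub>v u i"
  proof (intro allI impI)
    fix i assume i: "i < n"
    then have ui: "u i \<in> carrier_vec n" using u by (simp add: orthonormal_basis_def)
    show "spectral_mat n u g * spectral_mat n u h *\<^sub>v u i = (g i * h i) \<cdot>\<^sub>v u i"
      using assoc_mult_mat_vec[OF spectral_mat_carrier spectral_mat_carrier ui] spectral_mat_eigen[OF u i]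
        mult_mat_vec[OF spectral_mat_carrier ui] by (simp add: smult_smult_assoc mult.commute)
  qed
qed

lemma spectral_mat_one: "orthonormal_basis n u \<Longrightarrow> spectral_mat n u (\<lambda>i. 1) = 1\<^sub>m n"
  by (rule eq_matI) (auto simp: spectral_mat_def orthonormal_basis_complete)

lemma spectral_mat_pow:
  "orthonormal_basis n u \<Longrightarrow> spectral_mat n u g ^\<^sub>m m = spectral_mat n u (\<lambda>i. g i ^ m)"
  by (induction m) (simp_all add: spectral_mat_one spectral_mat_mult mult.commute)

lemma smult_spectral_mat: "c \<cdot>\<^sub>m spectral_mat n u g = spectral_mat n u (\<lambda>i. c * g i)"
  by (rule eq_matI) (auto simp: spectral_mat_def sum_distrib_left mult.assoc)

lemma adj_spectral_mat: "adj (spectral_mat n u g) = spectral_mat n u (\<lambda>i. cnj (g i))"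
  by (rule eq_matI) (auto simp: spectral_mat_def mult.commute)

lemma mat_exp_spectral_mat:
  assumes u: "orthonormal_basis n u"
  shows "mat_exp (spectral_mat n u g) = spectral_mat n u (\<lambda>i. exp (g i))"
proof (rule eq_matI)
  fix a b assume "a < dim_row (spectral_mat n u (\<lambda>i. exp (g i)))" "b < dim_col (spectral_mat n u (\<lambda>i. exp (g i)))"
  then have ab: "a < n" "b < n" by auto
  define w where "w i = u i $ a * cnj (u i $ b)" for i
  have "(\<lambda>m. \<Sum>i<n. w i * (g i ^ m /\<^sub>R fact m)) sums (\<Sum>i<n. w i * exp (g i))"
    by (intro sums_sum sums_mult exp_converges)
  moreover have "(spectral_mat n u g ^\<^sub>m m) $$ (a,b) / of_nat (fact m) = (\<Sum>i<n. w i * (g i ^ m /\<^sub>R fact m))" for m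
  proof -
    have conv: "z ^ m / of_nat (fact m) = z ^ m /\<^sub>R fact m" for z :: complex
      by (simp add: scaleR_conv_of_real divide_inverse mult.commute)
    show ?thesis using ab unfolding spectral_mat_pow[OF u]
      by (simp add: spectral_mat_def w_def sum_divide_distrib algebra_simps flip: conv)
  qed
  ultimately show "mat_exp (spectral_mat n u g) $$ (a,b) = spectral_mat n u (\<lambda>i. exp (g i)) $$ (a,b)"
    using ab by (simp add: mat_exp_def spectral_mat_def w_def sums_iff mult.commute)
qed (auto simp: mat_exp_def)

lemma mtrace_spectral_mat:
  assumes u: "orthonormal_basis n u"
  shows "mtrace (spectral_mat n u g) = (\<Sum>i<n. g i)"
proof -
  have "mtrace (spectral_mat n u g) = (\<Sum>a<n. \<Sum>i<n. g i * (cnj (u i $ a) * u i $ a))"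
    by (simp add: mtrace_def spectral_mat_def mult.commute)
  also have "\<dots> = (\<Sum>i<n. \<Sum>a<n. g i * (cnj (u i $ a) * u i $ a))"
    by (rule sum.swap)
  also have "\<dots> = (\<Sum>i<n. g i)"
  proof (rule sum.cong[OF refl])
    fix i assume "i \<in> {..<n}"
    then have "(\<Sum>a<n. cnj (u i $ a) * u i $ a) = 1"
      using u cinner_carrier[of "u i" n "u i"] by (simp add: orthonormal_basis_def)
    then show "(\<Sum>a<n. g i * (cnj (u i $ a) * u i $ a)) = g i" by (simp flip: sum_distrib_left)
  qed
  finally show ?thesis .
qed

lemma cinner_spectral_mat:
  assumes u: "orthonormal_basis n u" and v: "v \<in> carrier_vec n"
  shows "cinner v (spectral_mat n u g *\<^sub>v v) = (\<Sum>i<n. g i * ((cmod (cinner (u i) v))\<^sup>2))"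
proof -
  have uc: "u i \<in> carrier_vec n" if "i < n" for i using u that by (simp add: orthonormal_basis_def)
  have "cinner v (spectral_mat n u g *\<^sub>v v) = (\<Sum>a<n. cnj (v $ a) * (spectral_mat n u g *\<^sub>v v) $ a)"
    by (rule cinner_carrier) (simp add: mult_mat_vec_carrier[OF spectral_mat_carrier v])
  also have "\<dots> = (\<Sum>a<n. cnj (v $ a) * (\<Sum>b<n. (\<Sum>i<n. g i * (u i $ a * cnj (u i $ b))) * v $ b))"
    using index_mult_mat_vec_sum[OF spectral_mat_carrier v]
    by (simp add: spectral_mat_def del: index_mult_mat_vec)
  also have "\<dots> = (\<Sum>a<n. \<Sum>b<n. \<Sum>i<n. g i * ((cnj (v $ a) * u i $ a) * (cnj (u i $ b) * v $ b)))"
    by (simp add: sum_distrib_left sum_distrib_right mult.assoc mult.left_commute)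
  also have "\<dots> = (\<Sum>a<n. \<Sum>i<n. \<Sum>b<n. g i * ((cnj (v $ a) * u i $ a) * (cnj (u i $ b) * v $ b)))"
    by (intro sum.cong refl sum.swap)
  also have "\<dots> = (\<Sum>i<n. \<Sum>a<n. \<Sum>b<n. g i * ((cnj (v $ a) * u i $ a) * (cnj (u i $ b) * v $ b)))"
    by (rule sum.swap)
  also have "\<dots> = (\<Sum>i<n. g i * ((\<Sum>a<n. cnj (v $ a) * u i $ a) * (\<Sum>b<n. cnj (u i $ b) * v $ b)))"
    unfolding sum_product by (simp only: sum_distrib_left)
  also have "\<dots> = (\<Sum>i<n. g i * (cnj (cinner (u i) v) * cinner (u i) v))"
    using uc v by (intro sum.cong) (auto simp: cinner_carrier mult.commute)
  finally show ?thesis by (simp only: cnj_mult_self)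
qed

lemma psd_spectral_mat:
  assumes u: "orthonormal_basis n u" and f: "\<And>i. f i \<ge> 0"
  shows "psd (spectral_mat n u (\<lambda>i. complex_of_real (f i)))"
proof -
  have "0 \<le> Re (cinner v (spectral_mat n u (\<lambda>i. complex_of_real (f i)) *\<^sub>v v))" if "v \<in> carrier_vec n" for v
    using f by (simp add: cinner_spectral_mat[OF u that] sum_nonneg del: of_real_power)
  then show ?thesis unfolding psd_def by (simp add: adj_spectral_mat)
qed

section \<open>The trace norm of a Hermitian matrix\<close>

lemma cinner_add_smult_self_Re:
  assumes "x \<in> carrier_vec n" "z \<in> carrier_vec n"
  shows "Re (cinner (x + complex_of_real r \<cdot>\<^sub>v z) (x + complex_of_real r \<cdot>\<^sub>v z))
    = Re (cinner x x) + 2 * r * Re (cinner z x) + r * r * Re (cinner z z)"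
proof -
  have "cinner (x + complex_of_real r \<cdot>\<^sub>v z) (x + complex_of_real r \<cdot>\<^sub>v z)
     = cinner x x + r * cinner x z + r * cinner z x + r * r * cinner z z"
    using assms by (simp add: cinner_add_left[of _ n] cinner_add_right[of _ n] cinner_smult_right
        cinner_smult_left[of _ n] algebra_simps)
  moreover have "Re (cinner x z) = Re (cinner z x)" using cinner_commute[OF assms(2,1)] by simp
  ultimately show ?thesis by simp
qed

lemma psd_square_eq_eigenvalue_diff:
  assumes B: "B \<in> carrier_mat n n" "psd B" and C: "C \<in> carrier_mat n n" "psd C"
    and BC: "B * B = C * C"
    and z: "z \<in> carrier_vec n" "cinner z z = 1" and ev: "(B - C) *\<^sub>v z = complex_of_real m \<cdot>\<^sub>v z"
  shows "m = 0"
proof -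
  define b where "b = B *\<^sub>v z"
  define c where "c = C *\<^sub>v z"
  have b: "b \<in> carrier_vec n" and c: "c \<in> carrier_vec n" unfolding b_def c_def using B C z by auto
  have bc: "b - c = complex_of_real m \<cdot>\<^sub>v z"
    unfolding b_def c_def using B C z ev by (simp add: minus_mult_distrib_mat_vec)
  have bci: "b $ i - c $ i = complex_of_real m * z $ i" if "i < n" for i
    using arg_cong[OF bc, of "\<lambda>v. v $ i"] b c z that by simp
  have bc': "b = c + complex_of_real m \<cdot>\<^sub>v z" and cb': "c = b + complex_of_real (- m) \<cdot>\<^sub>v z"
    by (rule eq_vecI; use bci b c z in \<open>simp add: algebra_simps\<close>)+
  \<comment> \<open>\<open>\<parallel>Bz\<parallel>\<^sup>2 = \<langle>z, B\<^sup>2 z\<rangle> = \<langle>z, C\<^sup>2 z\<rangle> = \<parallel>Cz\<parallel>\<^sup>2\<close>\<close>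
  have bb: "Re (cinner b b) = Re (cinner c c)"
  proof -
    have "adj B = B" "adj C = C" using B C by (auto simp: psd_def)
    then have "cinner b b = cinner z ((B * B) *\<^sub>v z)" and "cinner c c = cinner z ((C * C) *\<^sub>v z)"
      unfolding b_def c_def using B C z
      by (simp_all add: cinner_mult_mat_vec[of _ n n] assoc_mult_mat_vec[of _ n n])
    then show ?thesis using BC by simp
  qed
  have "Re (cinner b b) = Re (cinner c c) + 2 * m * Re (cinner z c) + m * m"
    using cinner_add_smult_self_Re[OF c z(1), of m] z(2) unfolding bc'[symmetric] by simp
  moreover have "Re (cinner c c) = Re (cinner b b) - 2 * m * Re (cinner z b) + m * m"
    using cinner_add_smult_self_Re[OF b z(1), of "- m"] z(2) unfolding cb'[symmetric] by simp
  ultimately have eqs: "m * m = - (2 * m * Re (cinner z c))" "m * m = 2 * m * Re (cinner z b)"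
    using bb by linarith+
  have nonneg: "0 \<le> Re (cinner z b)" "0 \<le> Re (cinner z c)"
    unfolding b_def c_def using B C z by (auto simp: psd_def)
  have "m * m \<le> 0"
  proof (cases "m \<ge> 0")
    case True
    then have "0 \<le> 2 * m * Re (cinner z c)" using nonneg by simp
    then show ?thesis using eqs by linarith
  next
    case False
    then have "2 * m * Re (cinner z b) \<le> 0" using nonneg by (simp add: mult_nonpos_nonneg)
    then show ?thesis using eqs by linarith
  qed
  then show "m = 0" by (metis not_real_square_gt_zero linorder_not_le)
qed

lemma psd_eq_of_square_eq:
  assumes B: "B \<in> carrier_mat n n" "psd B" and C: "C \<in> carrier_mat n n" "psd C"
    and BC: "B * B = C * C"
  shows "B = C"
proof -
  have D: "B - C \<in> carrier_mat n n" using minus_carrier_mat[OF C(1)] .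
  have "adj (B - C) = B - C" using B C adj_minus[OF B(1) C(1)] by (simp add: psd_def)
  then obtain y \<mu> where y: "orthonormal_basis n y"
    and ev: "\<forall>i<n. (B - C) *\<^sub>v y i = complex_of_real (\<mu> i) \<cdot>\<^sub>v y i"
    using hermitian_spectral[OF D] by blast
  have \<mu>: "\<mu> i = 0" if "i < n" for i
    using y that by (intro psd_square_eq_eigenvalue_diff[OF B C BC _ _ ev[rule_format, OF that]])
      (auto simp: orthonormal_basis_def)
  have "B - C = spectral_mat n y (\<lambda>i. complex_of_real (\<mu> i))"
    by (rule eq_spectral_mat[OF y D ev])
  also have "\<dots> = 0\<^sub>m n n"
    by (rule eq_matI) (simp_all add: spectral_mat_def \<mu>)
  finally have "B - C = 0\<^sub>m n n" .
  show ?thesis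
  proof (rule eq_matI)
    fix i j assume "i < dim_row C" "j < dim_col C"
    then show "B $$ (i,j) = C $$ (i,j)"
      using arg_cong[OF \<open>B - C = 0\<^sub>m n n\<close>, of "\<lambda>M. M $$ (i,j)"] B C by simp
  qed (use B C in auto)
qed

lemma psd_sqrt_eqI:
  assumes C: "psd C" and CC: "C * C = A"
  shows "psd_sqrt A = C"
proof -
  define n where "n = dim_row C"
  have Cc: "C \<in> carrier_mat n n" using C unfolding psd_def n_def by simp
  have dim: "dim_row A = n" using CC Cc by auto
  show ?thesis unfolding psd_sqrt_def
  proof (rule the_equality)
    have "dim_row C = dim_row A" unfolding dim n_def ..
    then show "dim_row C = dim_row A \<and> psd C \<and> C * C = A" using C CC by blast
  next
    fix B assume B: "dim_row B = dim_row A \<and> psd B \<and> B * B = A"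
    then have Bp: "psd B" and BB: "B * B = C * C" and "dim_row B = n" using CC dim by auto
    then have "B \<in> carrier_mat n n" unfolding psd_def by simp
    from psd_eq_of_square_eq[OF this Bp Cc C BB] show "B = C" .
  qed
qed

lemma trace_norm_eigenbasis:
  assumes X: "X \<in> carrier_mat n n" and u: "orthonormal_basis n u"
    and eig: "\<forall>i<n. X *\<^sub>v u i = complex_of_real (d i) \<cdot>\<^sub>v u i"
  shows "trace_norm X = (\<Sum>i<n. \<bar>d i\<bar>)"
proof -
  let ?C = "spectral_mat n u (\<lambda>i. complex_of_real \<bar>d i\<bar>)"
  have "X = spectral_mat n u (\<lambda>i. complex_of_real (d i))" by (rule eq_spectral_mat[OF u X eig])
  then have "adj X * X = ?C * ?C"
    by (simp add: adj_spectral_mat spectral_mat_mult[OF u] flip: of_real_mult)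
  then have "psd_sqrt (adj X * X) = ?C"
    using psd_sqrt_eqI psd_spectral_mat[OF u, of "\<lambda>i. \<bar>d i\<bar>"] by simp
  then show ?thesis by (simp add: trace_norm_def mtrace_spectral_mat[OF u])
qed

section \<open>Distance between a mixture and a pure state\<close>

text \<open>With \<open>x = cos \<theta>\<close>, \<open>y = sin \<theta>\<close>, \<open>r = cos \<psi>\<close>, \<open>q = sin \<psi>\<close> the extremal case \<open>S = y q\<close> reads
  \<open>cos\<^sup>2 \<theta> - cos\<^sup>2 (\<theta> + \<psi>) = sin \<psi> sin (2\<theta> + \<psi>) \<le> sin \<psi>\<close>.\<close>

lemma pythagorean_pair_bound:
  fixes x y r q S :: real
  assumes x: "x \<ge> 0" and y: "y \<ge> 0" and xy: "x\<^sup>2 + y\<^sup>2 = 1" and r: "r \<ge> 0" and q: "q \<ge> 0"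
    and rq: "r\<^sup>2 + q\<^sup>2 = 1" and S: "0 \<le> S" "S \<le> y * q"
  shows "x\<^sup>2 - (x * r - S)\<^sup>2 \<le> q"
proof (cases "x * r \<ge> y * q")
  case True
  define K where "K = q * (x\<^sup>2 - y\<^sup>2) + r * (2 * x * y)"
  have "(x * r - y * q)\<^sup>2 \<le> (x * r - S)\<^sup>2"
    using True S by (intro power_mono) auto
  moreover have "x\<^sup>2 - (x * r - y * q)\<^sup>2 = q * K"
  proof -
    have "x\<^sup>2 - (x * r - y * q)\<^sup>2 = x\<^sup>2 * (r\<^sup>2 + q\<^sup>2) - (x * r - y * q)\<^sup>2"
      using rq by simp
    also have "\<dots> = q * K"
      unfolding K_def by (simp add: power2_eq_square algebra_simps)
    finally show ?thesis .
  qed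
  moreover have "K \<le> 1"
  proof -
    have "K\<^sup>2 + (q * (2 * x * y) - r * (x\<^sup>2 - y\<^sup>2))\<^sup>2 = (r\<^sup>2 + q\<^sup>2) * (x\<^sup>2 + y\<^sup>2)\<^sup>2"
      unfolding K_def by (simp add: power2_eq_square algebra_simps)
    then have "K\<^sup>2 \<le> 1\<^sup>2"
      unfolding rq xy using zero_le_power2[of "q * (2 * x * y) - r * (x\<^sup>2 - y\<^sup>2)"] by linarith
    then show ?thesis using abs_le_square_iff[of K 1] by simp
  qed
  ultimately show ?thesis using mult_left_le[of K q] q by linarith
next
  case False
  then have "(x * r)\<^sup>2 \<le> (y * q)\<^sup>2"
    using x r by (intro power_mono) auto
  then have "x\<^sup>2 * r\<^sup>2 + x\<^sup>2 * q\<^sup>2 \<le> (x\<^sup>2 + y\<^sup>2) * q\<^sup>2"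
    by (simp add: algebra_simps)
  then have "x\<^sup>2 \<le> q\<^sup>2"
    unfolding xy using rq by (simp flip: distrib_left)
  moreover have "q \<le> 1"
    using rq q by (metis abs_le_square_iff abs_of_nonneg abs_one le_add_same_cancel2 zero_le_power2 one_power2)
  then have "q\<^sup>2 \<le> q" using q by (simp add: power2_eq_square mult_left_le)
  ultimately show ?thesis using zero_le_power2[of "x * r - S"] by linarith
qed

lemma cmod_sum_mult_sq_le:
  "(cmod (\<Sum>i\<in>A. f i * g i))\<^sup>2 \<le> (\<Sum>i\<in>A. (cmod (f i))\<^sup>2) * (\<Sum>i\<in>A. (cmod (g i))\<^sup>2)"
proof -
  have "cmod (\<Sum>i\<in>A. f i * g i) \<le> (\<Sum>i\<in>A. \<bar>cmod (f i)\<bar> * \<bar>cmod (g i)\<bar>)"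
    by (rule order.trans[OF norm_sum]) (simp add: norm_mult)
  also have "\<dots> \<le> L2_set (\<lambda>i. cmod (f i)) A * L2_set (\<lambda>i. cmod (g i)) A"
    by (rule L2_set_mult_ineq)
  finally have "(cmod (\<Sum>i\<in>A. f i * g i))\<^sup>2 \<le> (L2_set (\<lambda>i. cmod (f i)) A * L2_set (\<lambda>i. cmod (g i)) A)\<^sup>2"
    by (rule power_mono) simp
  then show ?thesis by (simp add: L2_set_def power_mult_distrib sum_nonneg)
qed

lemma abs_L2_set_norm_diff_le:
  fixes f g :: "'a \<Rightarrow> 'b::real_normed_vector"
  shows "\<bar>L2_set (\<lambda>r. norm (f r)) R - L2_set (\<lambda>r. norm (g r)) R\<bar> \<le> L2_set (\<lambda>r. norm (f r + g r)) R"
proof -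
  have "L2_set (\<lambda>r. norm (f r)) R \<le> L2_set (\<lambda>r. norm (f r + g r) + norm (g r)) R"
  proof (rule L2_set_mono)
    show "norm (f r) \<le> norm (f r + g r) + norm (g r)" for r
      using norm_triangle_ineq4[of "f r + g r" "g r"] by simp
  qed simp
  moreover have "L2_set (\<lambda>r. norm (g r)) R \<le> L2_set (\<lambda>r. norm (f r + g r) + norm (f r)) R"
  proof (rule L2_set_mono)
    show "norm (g r) \<le> norm (f r + g r) + norm (f r)" for r
      using norm_triangle_ineq4[of "f r + g r" "f r"] by simp
  qed simp
  ultimately show ?thesis
    using L2_set_triangle_ineq[of "\<lambda>r. norm (f r + g r)" "\<lambda>r. norm (g r)" R]
      L2_set_triangle_ineq[of "\<lambda>r. norm (f r + g r)" "\<lambda>r. norm (f r)" R] by linarith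
qed

lemma L2_set_sum_mult_le:
  "L2_set (\<lambda>r. cmod (\<Sum>a\<in>I. f r a * g a)) R
     \<le> sqrt (\<Sum>r\<in>R. \<Sum>a\<in>I. (cmod (f r a))\<^sup>2) * sqrt (\<Sum>a\<in>I. (cmod (g a))\<^sup>2)"
proof -
  have "(\<Sum>r\<in>R. (cmod (\<Sum>a\<in>I. f r a * g a))\<^sup>2) \<le> (\<Sum>r\<in>R. (\<Sum>a\<in>I. (cmod (f r a))\<^sup>2) * (\<Sum>a\<in>I. (cmod (g a))\<^sup>2))"
    by (intro sum_mono cmod_sum_mult_sq_le)
  then show ?thesis
    unfolding L2_set_def by (simp add: sum_distrib_right real_sqrt_mult[symmetric])
qed

lemma cinner_eigenvector_combination:
  assumes M: "M \<in> carrier_mat n n" and x: "x \<in> carrier_vec n" and y: "y \<in> carrier_vec n"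
    and xx: "cinner x x = 1" and yy: "cinner y y = 1" and xy: "cinner x y = 0"
    and Mx: "M *\<^sub>v x = lx \<cdot>\<^sub>v x" and My: "M *\<^sub>v y = ly \<cdot>\<^sub>v y"
  shows "cinner (\<alpha> \<cdot>\<^sub>v x + \<beta> \<cdot>\<^sub>v y) (M *\<^sub>v (\<alpha> \<cdot>\<^sub>v x + \<beta> \<cdot>\<^sub>v y)) = cnj \<alpha> * \<alpha> * lx + cnj \<beta> * \<beta> * ly"
proof -
  have yx: "cinner y x = 0" using cinner_commute[OF x y] xy by simp
  have ax: "\<alpha> \<cdot>\<^sub>v x \<in> carrier_vec n" and bY: "\<beta> \<cdot>\<^sub>v y \<in> carrier_vec n" using x y by auto
  have "M *\<^sub>v (\<alpha> \<cdot>\<^sub>v x + \<beta> \<cdot>\<^sub>v y) = (\<alpha> * lx) \<cdot>\<^sub>v x + (\<beta> * ly) \<cdot>\<^sub>v y"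
    using mult_add_distrib_mat_vec[OF M ax bY] mult_mat_vec[OF M x] mult_mat_vec[OF M y] Mx My
    by (simp add: smult_smult_assoc mult.commute)
  then show ?thesis
    using x y ax bY xx yy xy yx
    by (simp add: cinner_add_left[of _ n] cinner_add_right[of _ n] cinner_smult_left[of _ n]
        cinner_smult_right algebra_simps)
qed

lemma at_most_one_negative_eigenvalue:
  assumes X: "X \<in> carrier_mat n n" and u: "orthonormal_basis n u"
    and eig: "\<forall>i<n. X *\<^sub>v u i = complex_of_real (d i) \<cdot>\<^sub>v u i"
    and w: "w \<in> carrier_vec n"
    and pos: "\<And>v. v \<in> carrier_vec n \<Longrightarrow> cinner w v = 0 \<Longrightarrow> 0 \<le> Re (cinner v (X *\<^sub>v v))"
    and ij: "i < n" "j < n" "d i < 0" "d j < 0"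
  shows "i = j"
proof (rule ccontr)
  assume "i \<noteq> j"
  have uc: "u k \<in> carrier_vec n" "cinner (u k) (u k) = 1" if "k < n" for k
    using u that by (auto simp: orthonormal_basis_def)
  have d: "d k = Re (cinner (u k) (X *\<^sub>v u k))" if "k < n" for k
    using eig uc[OF that] that by (simp add: cinner_smult_right)
  define gi where "gi = cinner w (u i)"
  define gj where "gj = cinner w (u j)"
  have "gi \<noteq> 0" "gj \<noteq> 0"
    using pos[OF uc(1)] d ij unfolding gi_def gj_def by (metis not_le)+
  \<comment> \<open>a vector in the plane of \<open>u i\<close>, \<open>u j\<close> orthogonal to \<open>w\<close>\<close>
  define v where "v = gj \<cdot>\<^sub>v u i + (- gi) \<cdot>\<^sub>v u j"
  have v: "v \<in> carrier_vec n" unfolding v_def using uc ij by simp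
  have "cinner w v = 0"
    unfolding v_def gi_def gj_def using w uc ij
    by (simp add: cinner_add_right[of _ n] cinner_smult_right)
  then have "0 \<le> Re (cinner v (X *\<^sub>v v))" by (rule pos[OF v])
  moreover have "cinner v (X *\<^sub>v v) = cnj gj * gj * d i + cnj (- gi) * (- gi) * d j"
    unfolding v_def using u ij eig \<open>i \<noteq> j\<close>
    by (intro cinner_eigenvector_combination[OF X]) (auto simp: orthonormal_basis_def)
  then have "Re (cinner v (X *\<^sub>v v)) = (cmod gj)\<^sup>2 * d i + (cmod gi)\<^sup>2 * d j"
    by (simp add: cnj_mult_self del: of_real_power)
  moreover have "(cmod gj)\<^sup>2 * d i < 0" "(cmod gi)\<^sup>2 * d j < 0"
    using \<open>gi \<noteq> 0\<close> \<open>gj \<noteq> 0\<close> ij by (simp_all add: mult_pos_neg)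
  ultimately show False by linarith
qed

lemma sum_abs_le_of_single_negative:
  fixes d :: "nat \<Rightarrow> real"
  assumes sum0: "(\<Sum>i<n. d i) = 0" and c: "0 \<le> c" and low: "\<And>i. i < n \<Longrightarrow> - c \<le> d i"
    and single: "\<And>i j. i < n \<Longrightarrow> j < n \<Longrightarrow> d i < 0 \<Longrightarrow> d j < 0 \<Longrightarrow> i = j"
  shows "(\<Sum>i<n. \<bar>d i\<bar>) \<le> 2 * c"
proof -
  \<comment> \<open>\<open>\<bar>d\<bar> = d + 2 max 0 (-d)\<close>, and only one summand of the second sum is nonzero\<close>
  have "(\<Sum>i<n. \<bar>d i\<bar>) = (\<Sum>i<n. d i + 2 * max 0 (- d i))"
    by (intro sum.cong refl) auto
  also have "\<dots> = 2 * (\<Sum>i<n. max 0 (- d i))"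
    using sum0 by (simp add: sum.distrib sum_distrib_left)
  also have "(\<Sum>i<n. max 0 (- d i)) \<le> c"
  proof (cases "\<exists>i<n. d i < 0")
    case True
    then obtain k where k: "k < n" "d k < 0" by blast
    have "max 0 (- d i) = (if i = k then - d k else 0)" if "i < n" for i
    proof (cases "i = k")
      case False
      then have "\<not> d i < 0" using single[OF that k(1) _ k(2)] by blast
      then show ?thesis using False by simp
    qed (use k in simp)
    then have "(\<Sum>i<n. max 0 (- d i)) = (\<Sum>i<n. if i = k then - d k else 0)"
      by (intro sum.cong) auto
    then show ?thesis using k low[OF k(1)] by simp
  next
    case False
    then have "(\<Sum>i<n. max 0 (- d i)) = 0" by (intro sum.neutral) auto
    then show ?thesis using c by simp
  qed
  finally show ?thesis by simp
qed

theorem trace_norm_le_of_nonneg_on_hyperplane: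
  assumes X: "X \<in> carrier_mat n n" and hX: "adj X = X" and tr: "mtrace X = 0"
    and w: "w \<in> carrier_vec n"
    and pos: "\<And>v. v \<in> carrier_vec n \<Longrightarrow> cinner w v = 0 \<Longrightarrow> 0 \<le> Re (cinner v (X *\<^sub>v v))"
    and low: "\<And>v. v \<in> carrier_vec n \<Longrightarrow> cinner v v = 1 \<Longrightarrow> - c \<le> Re (cinner v (X *\<^sub>v v))"
    and c: "0 \<le> c"
  shows "trace_norm X \<le> 2 * c"
proof -
  obtain u d where u: "orthonormal_basis n u" and eig: "\<forall>i<n. X *\<^sub>v u i = complex_of_real (d i) \<cdot>\<^sub>v u i"
    using hermitian_spectral[OF X hX] by blast
  have "mtrace X = (\<Sum>i<n. complex_of_real (d i))"
    using eq_spectral_mat[OF u X eig] mtrace_spectral_mat[OF u] by simp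
  then have "(\<Sum>i<n. d i) = 0" using tr by (simp flip: of_real_sum)
  moreover have "- c \<le> d i" if "i < n" for i
    using low[of "u i"] eig u that by (simp add: orthonormal_basis_def cinner_smult_right)
  ultimately have "(\<Sum>i<n. \<bar>d i\<bar>) \<le> 2 * c"
    using at_most_one_negative_eigenvalue[OF X u eig w pos] c by (intro sum_abs_le_of_single_negative)
  then show ?thesis using trace_norm_eigenbasis[OF X u eig] by simp
qed

text \<open>\<open>mixture_mat n R b = \<Sum>\<^sub>r\<^sub>\<in>\<^sub>R |b r\<rangle>\<langle>b r|\<close>, with the vector \<open>b r\<close> given by its coordinates.\<close>

definition mixture_mat :: "nat \<Rightarrow> 'r set \<Rightarrow> ('r \<Rightarrow> nat \<Rightarrow> complex) \<Rightarrow> complex mat" where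
  "mixture_mat n R b = mat n n (\<lambda>(a,c). \<Sum>r\<in>R. b r a * cnj (b r c))"

lemma mixture_mat_carrier [simp]: "mixture_mat n R b \<in> carrier_mat n n"
  by (simp add: mixture_mat_def)

lemma adj_mixture_mat: "adj (mixture_mat n R b) = mixture_mat n R b"
  by (rule eq_matI) (auto simp: mixture_mat_def mult.commute)

lemma mtrace_mixture_mat:
  "mtrace (mixture_mat n R b) = complex_of_real (\<Sum>r\<in>R. \<Sum>a<n. (cmod (b r a))\<^sup>2)"
proof -
  have "mtrace (mixture_mat n R b) = (\<Sum>a<n. \<Sum>r\<in>R. b r a * cnj (b r a))"
    by (simp add: mtrace_def mixture_mat_def)
  also have "\<dots> = (\<Sum>r\<in>R. \<Sum>a<n. b r a * cnj (b r a))"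
    by (rule sum.swap)
  finally show ?thesis unfolding of_real_sum by (simp only: complex_norm_square)
qed

lemma cinner_mixture_mat:
  assumes v: "v \<in> carrier_vec n"
  shows "cinner v (mixture_mat n R b *\<^sub>v v) = complex_of_real (\<Sum>r\<in>R. (cmod (\<Sum>a<n. cnj (b r a) * v $ a))\<^sup>2)"
proof -
  define w where "w r = (\<Sum>a<n. cnj (b r a) * v $ a)" for r
  have "cinner v (mixture_mat n R b *\<^sub>v v) = (\<Sum>a<n. cnj (v $ a) * (mixture_mat n R b *\<^sub>v v) $ a)"
    by (rule cinner_carrier) (simp add: mult_mat_vec_carrier[OF mixture_mat_carrier v])
  also have "\<dots> = (\<Sum>a<n. cnj (v $ a) * (\<Sum>c<n. (\<Sum>r\<in>R. b r a * cnj (b r c)) * v $ c))"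
    using index_mult_mat_vec_sum[OF mixture_mat_carrier[of n R b] v]
    by (intro sum.cong refl) (simp add: mixture_mat_def del: index_mult_mat_vec)
  also have "\<dots> = (\<Sum>a<n. \<Sum>c<n. \<Sum>r\<in>R. cnj (v $ a) * b r a * (cnj (b r c) * v $ c))"
    by (simp add: sum_distrib_left sum_distrib_right mult.assoc mult.left_commute)
  also have "\<dots> = (\<Sum>a<n. \<Sum>r\<in>R. \<Sum>c<n. cnj (v $ a) * b r a * (cnj (b r c) * v $ c))"
    by (intro sum.cong refl sum.swap)
  also have "\<dots> = (\<Sum>r\<in>R. \<Sum>a<n. \<Sum>c<n. cnj (v $ a) * b r a * (cnj (b r c) * v $ c))"
    by (rule sum.swap)
  also have "\<dots> = (\<Sum>r\<in>R. cnj (w r) * w r)"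
    unfolding w_def sum_product[symmetric] by (simp add: sum_distrib_left mult.commute)
  finally have "cinner v (mixture_mat n R b *\<^sub>v v) = (\<Sum>r\<in>R. complex_of_real ((cmod (w r))\<^sup>2))"
    by (simp only: cnj_mult_self)
  then show ?thesis by (simp add: w_def)
qed

lemma overlap_deficit_le:
  fixes b :: "'r \<Rightarrow> nat \<Rightarrow> complex"
  assumes R: "finite R" and phi: "phi < n" and nb: "(\<Sum>r\<in>R. \<Sum>a<n. (cmod (b r a))\<^sup>2) = 1"
    and u: "u \<in> carrier_vec n" and u1: "cinner u u = 1"
  shows "(cmod (u $ phi))\<^sup>2 - (\<Sum>r\<in>R. (cmod (\<Sum>a<n. cnj (b r a) * u $ a))\<^sup>2)
    \<le> sqrt (1 - (\<Sum>r\<in>R. (cmod (b r phi))\<^sup>2))"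
proof -
  define I where "I = {..<n} - {phi}"
  have split: "(\<Sum>a<n. f a) = f phi + (\<Sum>a\<in>I. f a)" for f :: "nat \<Rightarrow> 'x::comm_monoid_add"
    unfolding I_def using phi by (subst sum.remove[of _ phi]) auto
  define p where "p = (\<Sum>r\<in>R. (cmod (b r phi))\<^sup>2)"
  define g where "g = (cmod (u $ phi))\<^sup>2"
  have rest_b: "(\<Sum>r\<in>R. \<Sum>a\<in>I. (cmod (b r a))\<^sup>2) = 1 - p"
    using nb unfolding p_def split by (simp add: sum.distrib)
  have rest_u: "(\<Sum>a\<in>I. (cmod (u $ a))\<^sup>2) = 1 - g"
    using cinner_self_Re[OF u] u1 unfolding g_def split by simp
  have "0 \<le> (\<Sum>r\<in>R. \<Sum>a\<in>I. (cmod (b r a))\<^sup>2)" "0 \<le> (\<Sum>a\<in>I. (cmod (u $ a))\<^sup>2)"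
    by (intro sum_nonneg; simp)+
  moreover have "0 \<le> p" unfolding p_def by (intro sum_nonneg) simp
  ultimately have p: "0 \<le> p" "p \<le> 1" and g: "0 \<le> g" "g \<le> 1"
    using rest_b rest_u unfolding g_def by simp_all
  \<comment> \<open>split each overlap \<open>\<langle>b r, u\<rangle>\<close> into the \<open>\<phi>\<close>-term and the rest\<close>
  define A where "A = L2_set (\<lambda>r. cmod (cnj (b r phi) * u $ phi)) R"
  define S where "S = L2_set (\<lambda>r. cmod (\<Sum>a\<in>I. cnj (b r a) * u $ a)) R"
  have "\<bar>A - S\<bar> \<le> L2_set (\<lambda>r. cmod (\<Sum>a<n. cnj (b r a) * u $ a)) R"
    unfolding A_def S_def split by (rule abs_L2_set_norm_diff_le)
  from power_mono[OF this abs_ge_zero, of 2]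
  have "(A - S)\<^sup>2 \<le> (\<Sum>r\<in>R. (cmod (\<Sum>a<n. cnj (b r a) * u $ a))\<^sup>2)"
    by (simp add: L2_set_def sum_nonneg)
  moreover have "A = sqrt g * sqrt p"
    unfolding A_def L2_set_def p_def g_def
    by (simp add: norm_mult power_mult_distrib real_sqrt_mult mult.commute flip: sum_distrib_left)
  moreover have "S \<le> sqrt (1 - g) * sqrt (1 - p)"
    using L2_set_sum_mult_le[of "\<lambda>r a. cnj (b r a)" "\<lambda>a. u $ a" I R] rest_b rest_u
    unfolding S_def by (simp add: mult.commute)
  then have "(sqrt g)\<^sup>2 - (sqrt g * sqrt p - S)\<^sup>2 \<le> sqrt (1 - p)"
    using p g unfolding S_def by (intro pythagorean_pair_bound) auto
  ultimately show ?thesis using g unfolding g_def p_def by simp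
qed

lemma proj_eq_mixture_mat: "proj w = mixture_mat (dim_vec w) {()} (\<lambda>_ a. w $ a)"
  by (simp add: proj_def mixture_mat_def)

lemma cinner_proj:
  assumes "v \<in> carrier_vec (dim_vec w)"
  shows "cinner v (proj w *\<^sub>v v) = complex_of_real ((cmod (cinner w v))\<^sup>2)"
  using assms by (simp add: proj_eq_mixture_mat cinner_mixture_mat cinner_carrier)

lemma mtrace_proj: "mtrace (proj w) = cinner w w"
  by (simp add: mtrace_def proj_def cinner_def mult.commute)

lemma mtrace_minus:
  "A \<in> carrier_mat n n \<Longrightarrow> B \<in> carrier_mat n n \<Longrightarrow> mtrace (A - B) = mtrace A - mtrace B"
  by (simp add: mtrace_def sum_subtractf)

theorem trace_norm_mixture_minus_proj_le:
  fixes b :: "'r \<Rightarrow> nat \<Rightarrow> complex"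
  assumes R: "finite R" and phi: "phi < n" and nb: "(\<Sum>r\<in>R. \<Sum>a<n. (cmod (b r a))\<^sup>2) = 1"
  shows "trace_norm (mixture_mat n R b - proj (ket n phi)) \<le> 2 * sqrt (1 - (\<Sum>r\<in>R. (cmod (b r phi))\<^sup>2))"
proof (rule trace_norm_le_of_nonneg_on_hyperplane)
  let ?X = "mixture_mat n R b - proj (ket n phi)"
  have P: "proj (ket n phi) \<in> carrier_mat n n" by (simp add: proj_def ket_def)
  show X: "?X \<in> carrier_mat n n" using minus_carrier_mat[OF P] .
  show "adj ?X = ?X"
    using adj_minus[OF mixture_mat_carrier P] by (simp add: adj_mixture_mat proj_eq_mixture_mat)
  have "mtrace (proj (ket n phi)) = 1"
    using phi by (simp add: mtrace_proj ket_def cinner_unit_vec)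
  then show "mtrace ?X = 0"
    by (simp add: mtrace_minus[OF mixture_mat_carrier P] mtrace_mixture_mat nb)
  show "ket n phi \<in> carrier_vec n" by (simp add: ket_def)
  have quad: "Re (cinner v (?X *\<^sub>v v)) = (\<Sum>r\<in>R. (cmod (\<Sum>a<n. cnj (b r a) * v $ a))\<^sup>2) - (cmod (v $ phi))\<^sup>2"
    if v: "v \<in> carrier_vec n" for v
  proof -
    have "cinner v (?X *\<^sub>v v) = cinner v (mixture_mat n R b *\<^sub>v v) - cinner v (proj (ket n phi) *\<^sub>v v)"
      unfolding minus_mult_distrib_mat_vec[OF mixture_mat_carrier P v]
      using mult_mat_vec_carrier[OF mixture_mat_carrier v] mult_mat_vec_carrier[OF P v]
      by (rule cinner_minus_right)
    then show ?thesis
      using v phi by (simp add: cinner_mixture_mat cinner_proj ket_def cinner_unit_vec del: of_real_power)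
  qed
  show "0 \<le> Re (cinner v (?X *\<^sub>v v))" if "v \<in> carrier_vec n" "cinner (ket n phi) v = 0" for v
    unfolding quad[OF that(1)] using that phi by (simp add: ket_def cinner_unit_vec sum_nonneg)
  show "- sqrt (1 - (\<Sum>r\<in>R. (cmod (b r phi))\<^sup>2)) \<le> Re (cinner v (?X *\<^sub>v v))"
    if "v \<in> carrier_vec n" "cinner v v = 1" for v
    using overlap_deficit_le[OF R phi nb that] by (simp add: quad[OF that(1)])
  have "(\<Sum>r\<in>R. (cmod (b r phi))\<^sup>2) \<le> (\<Sum>r\<in>R. \<Sum>a<n. (cmod (b r a))\<^sup>2)"
    using phi by (intro sum_mono member_le_sum) auto
  then show "0 \<le> sqrt (1 - (\<Sum>r\<in>R. (cmod (b r phi))\<^sup>2))" using nb by simp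
qed

section \<open>The reduced dynamics of the system\<close>

lemma sum_lessThan_add:
  fixes a k :: nat
  shows "(\<Sum>p<a + k. f p) = (\<Sum>p<a. f p) + (\<Sum>l<k. f (a + l))"
  by (induction k) (simp_all add: add.assoc)

lemma sum_lessThan_mult:
  fixes m k :: nat
  shows "(\<Sum>p<m * k. f p) = (\<Sum>i<m. \<Sum>l<k. f (i * k + l))"
proof (induction m)
  case (Suc m)
  have "(\<Sum>p<Suc m * k. f p) = (\<Sum>p<m * k + k. f p)" by (simp add: add.commute)
  also have "\<dots> = (\<Sum>p<m * k. f p) + (\<Sum>l<k. f (m * k + l))" by (rule sum_lessThan_add)
  finally show ?case using Suc by simp
qed simp

lemma mult_add_less_mult:
  fixes i l m k :: nat
  assumes "i < m" "l < k"
  shows "i * k + l < m * k"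
proof -
  have "i * k + l < Suc i * k" using assms by simp
  also have "\<dots> \<le> m * k" using assms by (intro mult_le_mono1) simp
  finally show ?thesis .
qed

lemma tensor_vec_ket:
  assumes i: "i < dS" and j: "j < dE"
  shows "tensor_vec (ket dS i) (ket dE j) = unit_vec (dS * dE) (i * dE + j)"
proof (rule eq_vecI)
  fix p assume "p < dim_vec (unit_vec (dS * dE) (i * dE + j))"
  then have p: "p < dS * dE" by simp
  have "p div dE = i \<and> p mod dE = j \<longleftrightarrow> p = i * dE + j"
  proof
    assume "p div dE = i \<and> p mod dE = j"
    then show "p = i * dE + j" using div_mult_mod_eq[of p dE] by simp
  next
    assume "p = i * dE + j"
    then show "p div dE = i \<and> p mod dE = j" using j by simp
  qed
  then show "tensor_vec (ket dS i) (ket dE j) $ p = unit_vec (dS * dE) (i * dE + j) $ p"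
    using p j by (auto simp: tensor_vec_def ket_def unit_vec_def less_mult_imp_div_less)
qed (simp add: tensor_vec_def ket_def)

lemma unitary_spectral_mat:
  assumes u: "orthonormal_basis n u" and g: "\<And>i. cmod (g i) = 1"
  shows "unitary n (spectral_mat n u g)"
proof -
  have "cnj (g i) * g i = 1" for i using g[of i] by (simp add: cnj_mult_self)
  then show ?thesis
    by (simp add: unitary_def adj_spectral_mat spectral_mat_mult[OF u] spectral_mat_one[OF u])
qed

lemma evolution_operator:
  assumes u: "orthonormal_basis n u" and H: "H \<in> carrier_mat n n"
    and eig: "\<forall>k<n. H *\<^sub>v u k = complex_of_real (E k) \<cdot>\<^sub>v u k"
  shows "mat_exp ((- (\<i> * complex_of_real t)) \<cdot>\<^sub>m H) = spectral_mat n u (\<lambda>k. exp (- (\<i> * complex_of_real t) * E k))"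
    and "unitary n (spectral_mat n u (\<lambda>k. exp (- (\<i> * complex_of_real t) * E k)))"
  using eq_spectral_mat[OF u H eig]
  by (simp_all add: smult_spectral_mat mat_exp_spectral_mat[OF u] unitary_spectral_mat[OF u])

lemma unitary_col_norm:
  assumes U: "unitary n U" and q: "q < n"
  shows "(\<Sum>p<n. (cmod (U $$ (p,q)))\<^sup>2) = 1"
proof -
  have Uc: "U \<in> carrier_mat n n" using U by (simp add: unitary_def)
  have "(adj U * U) $$ (q,q) = (\<Sum>p<n. cnj (U $$ (p,q)) * U $$ (p,q))"
    using q Uc by (subst index_mult_mat_sum[of _ n n _ n]) auto
  also have "\<dots> = complex_of_real (\<Sum>p<n. (cmod (U $$ (p,q)))\<^sup>2)"
    by (simp add: cnj_mult_self del: of_real_power)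
  finally have "complex_of_real (\<Sum>p<n. (cmod (U $$ (p,q)))\<^sup>2) = (adj U * U) $$ (q,q)" ..
  then have "complex_of_real (\<Sum>p<n. (cmod (U $$ (p,q)))\<^sup>2) = 1"
    using U q by (simp add: unitary_def del: of_real_sum of_real_power)
  then show ?thesis by (simp only: of_real_eq_1_iff)
qed

text \<open>The amplitudes \<open>\<langle>i,l|U|\<phi>,j\<rangle>/\<surd>d\<^sub>E\<close> of the evolved basis states \<open>|\<phi>,j\<rangle>\<close>; the reduced state is the
  mixture of the vectors they form for \<open>j, l < d\<^sub>E\<close>.\<close>

definition reduced_amp :: "nat \<Rightarrow> nat \<Rightarrow> complex mat \<Rightarrow> nat \<times> nat \<Rightarrow> nat \<Rightarrow> complex" where
  "reduced_amp dE phi U r i = U $$ (i * dE + snd r, phi * dE + fst r) * complex_of_real (1 / sqrt (real dE))"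

lemma cmod_reduced_amp_sq:
  "(cmod (reduced_amp dE phi U r i))\<^sup>2 = (cmod (U $$ (i * dE + snd r, phi * dE + fst r)))\<^sup>2 / real dE"
  by (simp add: reduced_amp_def norm_divide power_divide)

lemma index_initial_state:
  assumes "a < dS * dE" "b < dS * dE" "phi < dS"
  shows "tensor_mat (proj (ket dS phi)) ((1 / of_nat dE) \<cdot>\<^sub>m 1\<^sub>m dE) $$ (a,b)
     = (if a = b \<and> a div dE = phi then complex_of_real (1 / real dE) else 0)"
proof -
  have "0 < dE" using assms by (metis mult_0_right not_less_zero neq0_conv)
  moreover have "a div dE < dS" "b div dE < dS" using assms by (auto simp: less_mult_imp_div_less)
  moreover have "a div dE = b div dE \<and> a mod dE = b mod dE \<longleftrightarrow> a = b"
    by (metis div_mult_mod_eq)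
  ultimately show ?thesis using assms
    by (auto simp: tensor_mat_def proj_def ket_def unit_vec_def)
qed

lemma index_evolved_state:
  assumes U: "U \<in> carrier_mat (dS * dE) (dS * dE)" and p: "p < dS * dE" and q: "q < dS * dE"
    and phi: "phi < dS"
  shows "(U * tensor_mat (proj (ket dS phi)) ((1 / of_nat dE) \<cdot>\<^sub>m 1\<^sub>m dE) * adj U) $$ (p,q)
     = complex_of_real (1 / real dE) * (\<Sum>j<dE. U $$ (p, phi * dE + j) * cnj (U $$ (q, phi * dE + j)))"
proof -
  define N where "N = dS * dE"
  define \<rho> where "\<rho> = tensor_mat (proj (ket dS phi)) ((1 / of_nat dE) \<cdot>\<^sub>m 1\<^sub>m dE)"
  define c where "c = complex_of_real (1 / real dE)"
  have \<rho>: "\<rho> \<in> carrier_mat N N" unfolding \<rho>_def N_def by (simp add: tensor_mat_def proj_def ket_def)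
  have U': "U \<in> carrier_mat N N" and pq: "p < N" "q < N" using U p q unfolding N_def by auto
  have U\<rho>: "(U * \<rho>) $$ (p,b) = U $$ (p,b) * (if b div dE = phi then c else 0)" if "b < N" for b
  proof -
    have "(U * \<rho>) $$ (p,b) = (\<Sum>a<N. U $$ (p,a) * \<rho> $$ (a,b))"
      by (rule index_mult_mat_sum[OF U' \<rho> pq(1) that])
    also have "\<dots> = (\<Sum>a<N. if a = b then U $$ (p,b) * (if b div dE = phi then c else 0) else 0)"
      using that by (intro sum.cong refl) (auto simp: \<rho>_def c_def index_initial_state[OF _ _ phi] N_def)
    finally show ?thesis using that by simp
  qed
  have "(U * \<rho> * adj U) $$ (p,q) = (\<Sum>b<N. U $$ (p,b) * (if b div dE = phi then c else 0) * cnj (U $$ (q,b)))"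
    using U' pq U\<rho> by (subst index_mult_mat_sum[OF mult_carrier_mat[OF U' \<rho>], of _ N]) auto
  also have "\<dots> = (\<Sum>i<dS. \<Sum>l<dE. U $$ (p, i * dE + l) * (if i = phi then c else 0) * cnj (U $$ (q, i * dE + l)))"
    unfolding N_def sum_lessThan_mult by (intro sum.cong refl) simp
  also have "\<dots> = (\<Sum>i<dS. if i = phi then (\<Sum>l<dE. c * (U $$ (p, phi * dE + l) * cnj (U $$ (q, phi * dE + l)))) else 0)"
    by (intro sum.cong refl) (auto simp: algebra_simps)
  also have "\<dots> = c * (\<Sum>j<dE. U $$ (p, phi * dE + j) * cnj (U $$ (q, phi * dE + j)))"
    using phi by (simp add: sum_distrib_left)
  finally show ?thesis unfolding \<rho>_def c_def .
qed

lemma ptrace_evolved_state: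
  assumes U: "U \<in> carrier_mat (dS * dE) (dS * dE)" and phi: "phi < dS"
  shows "ptrace_E dS dE (U * tensor_mat (proj (ket dS phi)) ((1 / of_nat dE) \<cdot>\<^sub>m 1\<^sub>m dE) * adj U)
    = mixture_mat dS ({..<dE} \<times> {..<dE}) (reduced_amp dE phi U)"
proof (rule eq_matI)
  fix i i' assume "i < dim_row (mixture_mat dS ({..<dE} \<times> {..<dE}) (reduced_amp dE phi U))"
    "i' < dim_col (mixture_mat dS ({..<dE} \<times> {..<dE}) (reduced_amp dE phi U))"
  then have ii: "i < dS" "i' < dS" by (auto simp: mixture_mat_def)
  define s where "s = complex_of_real (1 / sqrt (real dE))"
  have ss: "s * cnj s = complex_of_real (1 / real dE)" unfolding s_def by (simp flip: of_real_mult)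
  have "ptrace_E dS dE (U * tensor_mat (proj (ket dS phi)) ((1 / of_nat dE) \<cdot>\<^sub>m 1\<^sub>m dE) * adj U) $$ (i,i')
     = (\<Sum>l<dE. \<Sum>j<dE. (s * cnj s) * (U $$ (i * dE + l, phi * dE + j) * cnj (U $$ (i' * dE + l, phi * dE + j))))"
    using ii by (simp add: ptrace_E_def index_evolved_state[OF U mult_add_less_mult mult_add_less_mult phi]
        ss sum_distrib_left)
  also have "\<dots> = (\<Sum>j<dE. \<Sum>l<dE. (U $$ (i * dE + l, phi * dE + j) * s) * cnj (U $$ (i' * dE + l, phi * dE + j) * s))"
    by (subst sum.swap) (simp add: algebra_simps)
  also have "\<dots> = mixture_mat dS ({..<dE} \<times> {..<dE}) (reduced_amp dE phi U) $$ (i,i')"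
    using ii by (simp add: mixture_mat_def reduced_amp_def s_def sum.cartesian_product case_prod_beta)
  finally show "ptrace_E dS dE (U * tensor_mat (proj (ket dS phi)) ((1 / of_nat dE) \<cdot>\<^sub>m 1\<^sub>m dE) * adj U) $$ (i,i')
     = mixture_mat dS ({..<dE} \<times> {..<dE}) (reduced_amp dE phi U) $$ (i,i')" .
qed (auto simp: ptrace_E_def mixture_mat_def)

lemma reduced_amp_normalized:
  assumes U: "unitary (dS * dE) U" and phi: "phi < dS" and dE: "0 < dE"
  shows "(\<Sum>r\<in>{..<dE} \<times> {..<dE}. \<Sum>i<dS. (cmod (reduced_amp dE phi U r i))\<^sup>2) = 1"
proof -
  have "(\<Sum>r\<in>{..<dE} \<times> {..<dE}. \<Sum>i<dS. (cmod (reduced_amp dE phi U r i))\<^sup>2)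
      = (\<Sum>j<dE. \<Sum>l<dE. \<Sum>i<dS. (cmod (U $$ (i * dE + l, phi * dE + j)))\<^sup>2 / real dE)"
    by (simp add: sum.cartesian_product' cmod_reduced_amp_sq)
  also have "\<dots> = (\<Sum>j<dE. (\<Sum>i<dS. \<Sum>l<dE. (cmod (U $$ (i * dE + l, phi * dE + j)))\<^sup>2) / real dE)"
    by (simp add: sum.swap[of _ "{..<dE}" "{..<dS}"] sum_divide_distrib)
  also have "\<dots> = (\<Sum>j<dE. 1 / real dE)"
  proof (intro sum.cong refl)
    fix j assume "j \<in> {..<dE}"
    then have "phi * dE + j < dS * dE" using mult_add_less_mult[OF phi] by simp
    then show "(\<Sum>i<dS. \<Sum>l<dE. (cmod (U $$ (i * dE + l, phi * dE + j)))\<^sup>2) / real dE = 1 / real dE"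
      using unitary_col_norm[OF U] unfolding sum_lessThan_mult by simp
  qed
  finally show ?thesis using dE by simp
qed

lemma reduced_amp_overlap_ge:
  "(\<Sum>j<dE. (cmod (U $$ (phi * dE + j, phi * dE + j)))\<^sup>2) / real dE
     \<le> (\<Sum>r\<in>{..<dE} \<times> {..<dE}. (cmod (reduced_amp dE phi U r phi))\<^sup>2)"
proof -
  have "(\<Sum>j<dE. (cmod (U $$ (phi * dE + j, phi * dE + j)))\<^sup>2) / real dE
      \<le> (\<Sum>j<dE. \<Sum>l<dE. (cmod (U $$ (phi * dE + l, phi * dE + j)))\<^sup>2 / real dE)"
    unfolding sum_divide_distrib by (intro sum_mono member_le_sum) auto
  also have "\<dots> = (\<Sum>r\<in>{..<dE} \<times> {..<dE}. (cmod (reduced_amp dE phi U r phi))\<^sup>2)"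
    by (simp add: sum.cartesian_product' cmod_reduced_amp_sq)
  finally show ?thesis .
qed

lemma delta_attained:
  assumes dE: "0 < dE"
  shows "\<exists>\<sigma>. inj_on \<sigma> {..<dS * dE} \<and> \<sigma> ` {..<dS * dE} \<subseteq> {..<dS} \<times> {..<dE} \<and>
    delta dS dE Ev phi = Min {cmod (cinner (Ev k) (tensor_vec (ket dS (fst (\<sigma> k))) (ket dE (snd (\<sigma> k)))))
                              | k. k < dS * dE \<and> fst (\<sigma> k) = phi}"
proof -
  define F where "F \<sigma> = {cmod (cinner (Ev k) (tensor_vec (ket dS (fst (\<sigma> k))) (ket dE (snd (\<sigma> k)))))
                            | k. k < dS * dE \<and> fst (\<sigma> k) = phi}" for \<sigma> :: "nat \<Rightarrow> nat \<times> nat"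
  define S where "S = {Min (F \<sigma>) | \<sigma>. inj_on \<sigma> {..<dS * dE} \<and> \<sigma> ` {..<dS * dE} \<subseteq> {..<dS} \<times> {..<dE}}"
  \<comment> \<open>only the restriction of \<open>\<sigma>\<close> to \<open>{..<dS * dE}\<close> matters, so \<open>S\<close> is finite\<close>
  have "S \<subseteq> (\<lambda>\<sigma>. Min (F \<sigma>)) ` (PiE {..<dS * dE} (\<lambda>_. {..<dS} \<times> {..<dE}))"
  proof
    fix x assume "x \<in> S"
    then obtain \<sigma> where x: "x = Min (F \<sigma>)" and s: "\<sigma> ` {..<dS * dE} \<subseteq> {..<dS} \<times> {..<dE}"
      unfolding S_def by blast
    have "F (restrict \<sigma> {..<dS * dE}) = F \<sigma>" unfolding F_def by auto
    then show "x \<in> (\<lambda>\<sigma>. Min (F \<sigma>)) ` (PiE {..<dS * dE} (\<lambda>_. {..<dS} \<times> {..<dE}))"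
      using x s by (intro image_eqI[of _ _ "restrict \<sigma> {..<dS * dE}"]) auto
  qed
  then have "finite S" by (rule finite_subset) (intro finite_imageI finite_PiE, auto)
  moreover have "S \<noteq> {}"
  proof -
    have "inj_on (\<lambda>k. (k div dE, k mod dE)) {..<dS * dE}"
      unfolding inj_on_def by (metis div_mult_mod_eq prod.inject)
    moreover have "(\<lambda>k. (k div dE, k mod dE)) ` {..<dS * dE} \<subseteq> {..<dS} \<times> {..<dE}"
      using dE by (auto simp: less_mult_imp_div_less)
    ultimately show ?thesis unfolding S_def by blast
  qed
  ultimately have "Max S \<in> S" by (rule Max_in)
  moreover have "delta dS dE Ev phi = Max S" unfolding delta_def S_def F_def ..
  ultimately show ?thesis unfolding S_def F_def by auto
qed

lemma delta_le_overlap: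
  assumes dE: "0 < dE" and phi: "phi < dS" and j: "j < dE"
  shows "\<exists>k<dS * dE. delta dS dE Ev phi \<le> cmod (Ev k $ (phi * dE + j))"
proof -
  obtain \<sigma> where inj: "inj_on \<sigma> {..<dS * dE}" and sub: "\<sigma> ` {..<dS * dE} \<subseteq> {..<dS} \<times> {..<dE}"
    and \<delta>: "delta dS dE Ev phi = Min {cmod (cinner (Ev k) (tensor_vec (ket dS (fst (\<sigma> k))) (ket dE (snd (\<sigma> k)))))
                                      | k. k < dS * dE \<and> fst (\<sigma> k) = phi}"
    using delta_attained[OF dE] by blast
  \<comment> \<open>an injection between sets of equal size hits \<open>(\<phi>, j)\<close>\<close>
  have "\<sigma> ` {..<dS * dE} = {..<dS} \<times> {..<dE}"
    using card_image[OF inj] by (intro card_subset_eq[OF _ sub]) (simp_all add: card_cartesian_product)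
  then have "(phi, j) \<in> \<sigma> ` {..<dS * dE}" using phi j by simp
  then obtain k where k: "k < dS * dE" and \<sigma>k: "\<sigma> k = (phi, j)" by (metis imageE lessThan_iff)
  have "delta dS dE Ev phi \<le> cmod (cinner (Ev k) (tensor_vec (ket dS (fst (\<sigma> k))) (ket dE (snd (\<sigma> k)))))"
    unfolding \<delta> by (rule Min_le) (simp, rule CollectI, rule exI[of _ k], simp add: k \<sigma>k)
  also have "\<dots> = cmod (Ev k $ (phi * dE + j))"
    using mult_add_less_mult[OF phi j] by (simp add: \<sigma>k tensor_vec_ket[OF phi j] cinner_unit_vec_right)
  finally show ?thesis using k by blast
qed

lemma cmod_sum_unit_weights_ge:
  fixes w :: "'a \<Rightarrow> real" and z :: "'a \<Rightarrow> complex"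
  assumes K: "finite K" and k0: "k0 \<in> K" and w0: "\<And>k. k \<in> K \<Longrightarrow> 0 \<le> w k" and w1: "(\<Sum>k\<in>K. w k) = 1"
    and z: "\<And>k. k \<in> K \<Longrightarrow> cmod (z k) = 1"
  shows "2 * w k0 - 1 \<le> cmod (\<Sum>k\<in>K. z k * w k)"
proof -
  have "cmod (\<Sum>k\<in>K - {k0}. z k * w k) \<le> (\<Sum>k\<in>K - {k0}. cmod (z k * w k))"
    by (rule norm_sum)
  also have "\<dots> = (\<Sum>k\<in>K - {k0}. w k)"
    using z w0 by (intro sum.cong) (auto simp: norm_mult)
  also have "\<dots> = 1 - w k0"
    using w1 sum.remove[OF K k0, of w] by simp
  finally have "cmod (\<Sum>k\<in>K - {k0}. z k * w k) \<le> 1 - w k0" .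
  moreover have "cmod (z k0 * w k0) = w k0" using z w0 k0 by (simp add: norm_mult)
  ultimately show ?thesis
    using sum.remove[OF K k0, of "\<lambda>k. z k * w k"]
      norm_diff_ineq[of "z k0 * w k0" "\<Sum>k\<in>K - {k0}. z k * w k"] by simp
qed

lemma spectral_mat_diagonal_ge:
  assumes u: "orthonormal_basis n u" and g: "\<And>k. cmod (g k) = 1" and p: "p < n"
    and k0: "k0 < n" and \<delta>: "0 \<le> \<delta>" "\<delta> \<le> cmod (u k0 $ p)"
  shows "2 * \<delta>\<^sup>2 - 1 \<le> cmod (spectral_mat n u g $$ (p,p))"
proof -
  define w where "w k = (cmod (u k $ p))\<^sup>2" for k
  have "spectral_mat n u g $$ (p,p) = (\<Sum>k<n. g k * w k)"
    using p by (simp add: spectral_mat_def w_def complex_norm_square del: of_real_power)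
  moreover have "(\<Sum>k<n. w k) = 1"
  proof -
    have "complex_of_real (\<Sum>k<n. w k) = 1"
      using orthonormal_basis_complete[OF u p p] by (simp add: w_def complex_norm_square del: of_real_power)
    then show ?thesis by (simp only: of_real_eq_1_iff)
  qed
  moreover have "\<delta>\<^sup>2 \<le> w k0" unfolding w_def using \<delta> by (simp add: power_mono)
  ultimately show ?thesis
    using cmod_sum_unit_weights_ge[of "{..<n}" k0 w g] k0 g by (simp add: w_def)
qed

lemma evolved_overlap_ge:
  assumes u: "orthonormal_basis (dS * dE) Ev" and g: "\<And>k. cmod (g k) = 1"
    and dE: "0 < dE" and phi: "phi < dS" and big: "1 / sqrt 2 < delta dS dE Ev phi"
  shows "(2 * (delta dS dE Ev phi)\<^sup>2 - 1)\<^sup>2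
    \<le> (\<Sum>r\<in>{..<dE} \<times> {..<dE}. (cmod (reduced_amp dE phi (spectral_mat (dS * dE) Ev g) r phi))\<^sup>2)"
proof -
  define \<delta> where "\<delta> = delta dS dE Ev phi"
  define U where "U = spectral_mat (dS * dE) Ev g"
  have "0 < \<delta>" using big unfolding \<delta>_def by (smt (verit) divide_pos_pos real_sqrt_gt_zero)
  have "(1 / sqrt 2)\<^sup>2 < \<delta>\<^sup>2" using big unfolding \<delta>_def by (intro power_strict_mono) auto
  then have pos: "0 \<le> 2 * \<delta>\<^sup>2 - 1" by (simp add: power_divide)
  have "(2 * \<delta>\<^sup>2 - 1)\<^sup>2 \<le> (cmod (U $$ (phi * dE + j, phi * dE + j)))\<^sup>2" if j: "j < dE" for j
  proof -
    obtain k where "k < dS * dE" "\<delta> \<le> cmod (Ev k $ (phi * dE + j))"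
      using delta_le_overlap[OF dE phi j] unfolding \<delta>_def by blast
    then have "2 * \<delta>\<^sup>2 - 1 \<le> cmod (U $$ (phi * dE + j, phi * dE + j))"
      unfolding U_def using \<open>0 < \<delta>\<close> mult_add_less_mult[OF phi j]
      by (intro spectral_mat_diagonal_ge[OF u g]) auto
    then show ?thesis using pos by (simp add: power_mono)
  qed
  then have "(2 * \<delta>\<^sup>2 - 1)\<^sup>2 \<le> (\<Sum>j<dE. (cmod (U $$ (phi * dE + j, phi * dE + j)))\<^sup>2) / real dE"
    using dE sum_mono[of "{..<dE}" "\<lambda>_. (2 * \<delta>\<^sup>2 - 1)\<^sup>2"] by (simp add: field_simps)
  also have "\<dots> \<le> (\<Sum>r\<in>{..<dE} \<times> {..<dE}. (cmod (reduced_amp dE phi U r phi))\<^sup>2)"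
    by (rule reduced_amp_overlap_ge)
  finally show ?thesis unfolding \<delta>_def U_def .
qed

theorem lemma2:
  fixes dS dE :: nat and H :: "complex mat" and Ev :: "nat \<Rightarrow> complex vec"
    and E :: "nat \<Rightarrow> real" and phi :: nat
  assumes dS: "0 < dS" and dE: "0 < dE"
    and H: "H \<in> carrier_mat (dS * dE) (dS * dE)" and herm: "adj H = H"
    and Ev_dim: "\<forall>k < dS * dE. Ev k \<in> carrier_vec (dS * dE)"
    and Ev_orth: "\<forall>k < dS * dE. \<forall>l < dS * dE. cinner (Ev k) (Ev l) = (if k = l then 1 else 0)"
    and Ev_eig: "\<forall>k < dS * dE. H *\<^sub>v Ev k = complex_of_real (E k) \<cdot>\<^sub>v Ev k"
    and phi: "phi < dS"
    and big: "delta dS dE Ev phi > 1 / sqrt 2"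
  shows "\<forall>t :: real.
    trace_norm (ptrace_E dS dE
        (mat_exp ((- (\<i> * complex_of_real t)) \<cdot>\<^sub>m H)
         * tensor_mat (proj (ket dS phi)) ((1 / of_nat dE) \<cdot>\<^sub>m 1\<^sub>m dE)
         * adj (mat_exp ((- (\<i> * complex_of_real t)) \<cdot>\<^sub>m H)))
      - proj (ket dS phi))
    \<le> 4 * delta dS dE Ev phi * sqrt (1 - (delta dS dE Ev phi)\<^sup>2)"
proof
  fix t :: real
  define \<delta> where "\<delta> = delta dS dE Ev phi"
  define U where "U = spectral_mat (dS * dE) Ev (\<lambda>k. exp (- (\<i> * complex_of_real t) * E k))"
  define p where "p = (\<Sum>r\<in>{..<dE} \<times> {..<dE}. (cmod (reduced_amp dE phi U r phi))\<^sup>2)"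
  have u: "orthonormal_basis (dS * dE) Ev" unfolding orthonormal_basis_def using Ev_dim Ev_orth by simp
  note evolution = evolution_operator[OF u H Ev_eig, of t, folded U_def]
  then have Uc: "U \<in> carrier_mat (dS * dE) (dS * dE)" by (simp add: unitary_def)
  have "0 \<le> \<delta>" using big unfolding \<delta>_def by (smt (verit) divide_nonneg_nonneg real_sqrt_ge_zero)
  have "trace_norm (ptrace_E dS dE (mat_exp ((- (\<i> * complex_of_real t)) \<cdot>\<^sub>m H)
         * tensor_mat (proj (ket dS phi)) ((1 / of_nat dE) \<cdot>\<^sub>m 1\<^sub>m dE)
         * adj (mat_exp ((- (\<i> * complex_of_real t)) \<cdot>\<^sub>m H))) - proj (ket dS phi))
      = trace_norm (mixture_mat dS ({..<dE} \<times> {..<dE}) (reduced_amp dE phi U) - proj (ket dS phi))"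
    unfolding evolution(1) ptrace_evolved_state[OF Uc phi] ..
  also have "\<dots> \<le> 2 * sqrt (1 - p)"
    unfolding p_def using reduced_amp_normalized[OF evolution(2) phi dE]
    by (intro trace_norm_mixture_minus_proj_le[OF _ phi]) simp_all
  also have "\<dots> \<le> 2 * sqrt (1 - (2 * \<delta>\<^sup>2 - 1)\<^sup>2)"
    using evolved_overlap_ge[OF u _ dE phi big] unfolding p_def U_def \<delta>_def by simp
  also have "1 - (2 * \<delta>\<^sup>2 - 1)\<^sup>2 = (2 * \<delta>)\<^sup>2 * (1 - \<delta>\<^sup>2)"
    by (simp add: power2_eq_square algebra_simps)
  finally show "trace_norm (ptrace_E dS dE (mat_exp ((- (\<i> * complex_of_real t)) \<cdot>\<^sub>m H)
         * tensor_mat (proj (ket dS phi)) ((1 / of_nat dE) \<cdot>\<^sub>m 1\<^sub>m dE)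
         * adj (mat_exp ((- (\<i> * complex_of_real t)) \<cdot>\<^sub>m H))) - proj (ket dS phi))
      \<le> 4 * delta dS dE Ev phi * sqrt (1 - (delta dS dE Ev phi)\<^sup>2)"
    using \<open>0 \<le> \<delta>\<close> unfolding \<delta>_def by (simp add: real_sqrt_mult)
qed

end
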